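(* Let $v:\mathcal Q\to\mathbb R$ be the valuation induced by an assignment message (as defined in the context). Then $v$ satisfies multi-unit strong exchangeability: for every price vector $\mathbf p\in\mathbb R^n$ and all bundles $\mathbf q,\mathbf r\in D(\mathbf p)$ with $\sum_i q_i=\sum_i r_i=\min_{\mathbf q'\in D(\mathbf p)}\sum_i q'_i$, there is a set $\sigma\subseteq \operatorname{supp}_+(\mathbf q-\mathbf r)\times\operatorname{supp}_+(\mathbf r-\mathbf q)$ such that (1) for each $(i,j)\in\sigma$, both $\mathbf q-\mathbf e_i+\mathbf e_j\in D(\mathbf p)$ and $\mathbf r+\mathbf e_i-\mathbf e_j\in D(\mathbf p)$; (2) for each $i\in\operatorname{supp}_+(\mathbf q-\mathbf r)$ we have $1\le|\{j':(i,j')\in\sigma\}|\le q_i-r_i$, and for each $j\in\operatorname{supp}_+(\mathbf r-\mathbf q)$ we have $1\le |\{i':(i',j)\in\sigma\}|\le r_j-q_j$.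
   Context: There are $n\ge 2$ types of goods. A bundle is $\mathbf q\in\mathbb Z^n$; a valuation is a function $v:\mathcal Q\to\mathbb R$ on a finite set $\mathcal Q\subset\mathbb Z^n$ with $0\in\mathcal Q$. For a price vector $\mathbf p\in\mathbb R^n$, the demand set is $D(\mathbf p)=\arg\max_{\mathbf q\in\mathcal Q}\, v(\mathbf q)-\langle\mathbf p,\mathbf q\rangle$. $\mathbf e_i$ is the $i$-th standard unit vector, and $\operatorname{supp}_+(\mathbf a-\mathbf b)=\{i: a_i-b_i>0\}$. A family $\mathcal T$ of subsets of a finite set $J$ is a tree if it is nonempty and any $K,L\in\mathcal T$ with $K\cap L\neq\emptyset$ satisfy $K\subseteq L$ or $L\subseteq K$. An assignment message consists of: variables indexed by $J=\{1,\dots,m\}$, each $j\in J$ associated with a good $k_j\in\{1,\dots,n\}$ and a value $v_j\in\mathbb R$; with $R_i=\{j\in J:k_j=i\}$ assumed nonempty for every $i$, and $R_0:=J$; a family $\mathcal I$ of subsets of $J$, each $I\in\mathcal I$ having integral bounds $\ell(I)\le 0\le u(I)$; such that $\mathcal I=\mathcal T_0\cup\mathcal T_1\cup\dots\cup\mathcal T_n$ where each $\mathcal T_i$ is a tree, for $i\ge 1$: $\mathcal T_i\subseteq\mathcal P(R_i)$, $R_i\in\mathcal T_i$ and $\{j\}\in\mathcal T_i$ for all $j\in R_i$; and $J\in\mathcal T_0$, $\{j\}\in\mathcal T_0$ for all $j\in J$. The induced valuation is $v(\mathbf q)=\max\{\sum_{j=1}^m v_jx_j : \mathbf x\in\mathbb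 Z^m,\ \ell(I)\le\sum_{j\in I}x_j\le u(I)\ \forall I\in\mathcal I,\ \sum_{j\in R_i}x_j=q_i\ \forall i=1,\dots,n\}$, with $\mathcal Q$ the (finite) set of $\mathbf q\in\mathbb Z^n$ for which this program is feasible. *)

theory Defs
  imports Complex_Main
begin

text \<open>Bundles, price vectors and
  integral solution vectors are functions on nat (values outside the index range
  are irrelevant resp. forced to zero for bundles).\<close>

definition is_tree :: "nat set set \<Rightarrow> bool" where
  "is_tree T \<longleftrightarrow> T \<noteq> {} \<and> (\<forall>K\<in>T. \<forall>L\<in>T. K \<inter> L \<noteq> {} \<longrightarrow> K \<subseteq> L \<or> L \<subseteq> K)"

definition goods_var :: "nat \<Rightarrow> (nat \<Rightarrow> nat) \<Rightarrow> nat \<Rightarrow> nat set" where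
  "goods_var m k i = {j \<in> {1..m}. k j = i}"

definition assignment_message ::
  "nat \<Rightarrow> nat \<Rightarrow> (nat \<Rightarrow> nat) \<Rightarrow> (nat \<Rightarrow> real) \<Rightarrow> nat set set
   \<Rightarrow> (nat set \<Rightarrow> int) \<Rightarrow> (nat set \<Rightarrow> int) \<Rightarrow> (nat \<Rightarrow> nat set set) \<Rightarrow> bool" where
  "assignment_message n m k w \<I> l u T \<longleftrightarrow>
     (\<forall>j\<in>{1..m}. k j \<in> {1..n}) \<and>
     (\<forall>i\<in>{1..n}. goods_var m k i \<noteq> {}) \<and>
     (\<forall>I\<in>\<I>. l I \<le> 0 \<and> 0 \<le> u I) \<and>
     \<I> = (\<Union>i\<in>{0..n}. T i) \<and>
     (\<forall>i\<in>{0..n}. is_tree (T i)) \<and>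
     (\<forall>i\<in>{1..n}. T i \<subseteq> Pow (goods_var m k i) \<and> goods_var m k i \<in> T i \<and>
                  (\<forall>j\<in>goods_var m k i. {j} \<in> T i)) \<and>
     T 0 \<subseteq> Pow {1..m} \<and> {1..m} \<in> T 0 \<and> (\<forall>j\<in>{1..m}. {j} \<in> T 0)"

definition am_feasible ::
  "nat \<Rightarrow> nat \<Rightarrow> (nat \<Rightarrow> nat) \<Rightarrow> nat set set \<Rightarrow> (nat set \<Rightarrow> int) \<Rightarrow> (nat set \<Rightarrow> int)
   \<Rightarrow> (nat \<Rightarrow> int) \<Rightarrow> (nat \<Rightarrow> int) \<Rightarrow> bool" where
  "am_feasible n m k \<I> l u x q \<longleftrightarrow>
     (\<forall>I\<in>\<I>. l I \<le> (\<Sum>j\<in>I. x j) \<and> (\<Sum>j\<in>I. x j) \<le> u I) \<and>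
     (\<forall>i\<in>{1..n}. (\<Sum>j\<in>goods_var m k i. x j) = q i)"

definition am_bundles ::
  "nat \<Rightarrow> nat \<Rightarrow> (nat \<Rightarrow> nat) \<Rightarrow> nat set set \<Rightarrow> (nat set \<Rightarrow> int) \<Rightarrow> (nat set \<Rightarrow> int)
   \<Rightarrow> (nat \<Rightarrow> int) set" where
  "am_bundles n m k \<I> l u =
     {q. (\<forall>i. i \<notin> {1..n} \<longrightarrow> q i = 0) \<and> (\<exists>x. am_feasible n m k \<I> l u x q)}"

definition am_valuation ::
  "nat \<Rightarrow> nat \<Rightarrow> (nat \<Rightarrow> nat) \<Rightarrow> (nat \<Rightarrow> real) \<Rightarrow> nat set set \<Rightarrow> (nat set \<Rightarrow> int)
   \<Rightarrow> (nat set \<Rightarrow> int) \<Rightarrow> (nat \<Rightarrow> int) \<Rightarrow> real" where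
  "am_valuation n m k w \<I> l u q =
     Max {(\<Sum>j\<in>{1..m}. w j * real_of_int (x j)) | x. am_feasible n m k \<I> l u x q}"

definition price_pair :: "nat \<Rightarrow> (nat \<Rightarrow> real) \<Rightarrow> (nat \<Rightarrow> int) \<Rightarrow> real" where
  "price_pair n p q = (\<Sum>i\<in>{1..n}. p i * real_of_int (q i))"

definition demand ::
  "nat \<Rightarrow> (nat \<Rightarrow> int) set \<Rightarrow> ((nat \<Rightarrow> int) \<Rightarrow> real) \<Rightarrow> (nat \<Rightarrow> real) \<Rightarrow> (nat \<Rightarrow> int) set" where
  "demand n Q v p = {q \<in> Q. \<forall>q'\<in>Q. v q' - price_pair n p q' \<le> v q - price_pair n p q}"

definition unit_vec :: "nat \<Rightarrow> nat \<Rightarrow> int" where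
  "unit_vec i = (\<lambda>k. if k = i then 1 else 0)"

definition supp_pos :: "nat \<Rightarrow> (nat \<Rightarrow> int) \<Rightarrow> (nat \<Rightarrow> int) \<Rightarrow> nat set" where
  "supp_pos n a b = {i \<in> {1..n}. a i - b i > 0}"

definition bsize :: "nat \<Rightarrow> (nat \<Rightarrow> int) \<Rightarrow> int" where
  "bsize n q = (\<Sum>i\<in>{1..n}. q i)"

end

(* Let x and y be optimal solutions for q and r and d = y - x.  As q and r have the same size,
   d sums to zero, and it splits into integral vectors c, each conformal to d on every set of
   the message and each moving at most one unit from one good to another.  Conformality keeps
   x + c and y - c feasible; their utilities add up to those of x and y, so both stay optimal,
   and the moves of these vectors c form the required set of exchanges.

   To split d, replace each variable j by |d j| unit copies carrying the sign of d j.  Every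
   laminar family admits a matching of positive with negative units such that a unit whose
   partner lies outside a set K of the family (or which has no partner) has the sign of the net
   charge of K.  The matching for the tree T_0 is perfect because d sums to zero; alternating it
   with the matchings for the goods trees gives paths, and the units on one such path (or all
   units, if the goods matchings are perfect as well) yield c. *)

theory Submission
  imports Defs "HOL-Library.FuncSet"
begin

section \<open>Matchings\<close>

definition matching :: "('a \<times> 'a) set \<Rightarrow> bool" where
  "matching M \<longleftrightarrow> inj_on fst M \<and> inj_on snd M"

definition matched :: "('a \<times> 'a) set \<Rightarrow> 'a set" where
  "matched M = fst ` M \<union> snd ` M"

definition closed_under :: "('a \<times> 'a) set \<Rightarrow> 'a set \<Rightarrow> bool" where
  "closed_under M S \<longleftrightarrow> (\<forall>(a, b)\<in>M. a \<in> S \<longleftrightarrow> b \<in> S)"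

lemma matching_eq_snd: "matching M \<Longrightarrow> (a, b) \<in> M \<Longrightarrow> (a, b') \<in> M \<Longrightarrow> b = b'"
  unfolding matching_def by (metis fst_conv inj_onD snd_conv)

lemma matching_eq_fst: "matching M \<Longrightarrow> (a, b) \<in> M \<Longrightarrow> (a', b) \<in> M \<Longrightarrow> a = a'"
  unfolding matching_def by (metis fst_conv inj_onD snd_conv)

lemma matching_Un:
  "matching A \<Longrightarrow> matching B \<Longrightarrow> matched A \<inter> matched B = {} \<Longrightarrow> matching (A \<union> B)"
  unfolding matching_def matched_def inj_on_def by blast

lemma matched_subset: "M \<subseteq> A \<times> A \<Longrightarrow> matched M \<subseteq> A"
  unfolding matched_def by force

lemma matching_UN:
  assumes "\<And>i. i \<in> I \<Longrightarrow> matching (M i)"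
    and "\<And>i i'. i \<in> I \<Longrightarrow> i' \<in> I \<Longrightarrow> i \<noteq> i' \<Longrightarrow> matched (M i) \<inter> matched (M i') = {}"
  shows "matching (\<Union>i\<in>I. M i)"
  unfolding matching_def
proof (intro conjI inj_onI)
  fix p p' assume p: "p \<in> (\<Union>i\<in>I. M i)" and p': "p' \<in> (\<Union>i\<in>I. M i)"
  then obtain i i' where i: "i \<in> I" "p \<in> M i" and i': "i' \<in> I" "p' \<in> M i'" by blast
  have fst_mem: "fst p \<in> matched (M i)" "fst p' \<in> matched (M i')"
    and snd_mem: "snd p \<in> matched (M i)" "snd p' \<in> matched (M i')"
    using i i' unfolding matched_def by blast+
  show "p = p'" if e: "fst p = fst p'"
  proof -
    have "i = i'"
      using assms(2)[OF i(1) i'(1)] fst_mem e by (metis disjoint_iff)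
    then show ?thesis using assms(1)[OF i(1)] i(2) i'(2) e unfolding matching_def by (metis inj_onD)
  qed
  show "p = p'" if e: "snd p = snd p'"
  proof -
    have "i = i'"
      using assms(2)[OF i(1) i'(1)] snd_mem e by (metis disjoint_iff)
    then show ?thesis using assms(1)[OF i(1)] i(2) i'(2) e unfolding matching_def by (metis inj_onD)
  qed
qed

lemma sum_split_matching:
  assumes "finite W" "matching M" "fst ` M \<inter> snd ` M = {}" "closed_under M W"
  shows "(\<Sum>w\<in>W. f w) =
           (\<Sum>p\<in>{p\<in>M. fst p \<in> W}. f (fst p) + f (snd p)) + (\<Sum>w\<in>W - matched M. f w)"
proof -
  let ?MW = "{p\<in>M. fst p \<in> W}"
  have inj: "inj_on fst ?MW" "inj_on snd ?MW"
    using assms(2) unfolding matching_def by (auto intro: inj_on_subset)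
  have fin: "finite ?MW" using finite_imageD[OF finite_subset[OF _ assms(1)] inj(1)] by blast
  have closed: "fst p \<in> W \<longleftrightarrow> snd p \<in> W" if "p \<in> M" for p
    using assms(4) that unfolding closed_under_def by (cases p) auto
  have W_matched: "W \<inter> matched M = fst ` ?MW \<union> snd ` ?MW"
  proof
    show "W \<inter> matched M \<subseteq> fst ` ?MW \<union> snd ` ?MW"
    proof
      fix v assume v: "v \<in> W \<inter> matched M"
      then obtain p where "p \<in> M" "v = fst p \<or> v = snd p" unfolding matched_def by blast
      then show "v \<in> fst ` ?MW \<union> snd ` ?MW" using v closed by blast
    qed
    show "fst ` ?MW \<union> snd ` ?MW \<subseteq> W \<inter> matched M"
      using closed unfolding matched_def by blast
  qed
  have disj: "fst ` ?MW \<inter> snd ` ?MW = {}" using assms(3) by blast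
  have "(\<Sum>w\<in>W. f w) = (\<Sum>w\<in>W \<inter> matched M. f w) + (\<Sum>w\<in>W - matched M. f w)"
    using sum.subset_diff[of "W \<inter> matched M" W f] assms(1) by (simp add: Diff_Int add.commute)
  also have "(\<Sum>w\<in>W \<inter> matched M. f w) = (\<Sum>w\<in>fst ` ?MW. f w) + (\<Sum>w\<in>snd ` ?MW. f w)"
    unfolding W_matched using disj fin by (simp add: sum.union_disjoint)
  also have "\<dots> = (\<Sum>p\<in>?MW. f (fst p) + f (snd p))"
    using inj by (simp add: sum.reindex sum.distrib)
  finally show ?thesis .
qed

definition mate :: "('a \<times> 'a) set \<Rightarrow> 'a \<Rightarrow> 'a" where
  "mate M a = (THE b. (a, b) \<in> M)"

lemma mate_eq: "matching M \<Longrightarrow> (a, b) \<in> M \<Longrightarrow> mate M a = b"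
  unfolding mate_def by (rule the_equality) (auto intro: matching_eq_snd)

lemma mate_converse_eq: "matching M \<Longrightarrow> (a, b) \<in> M \<Longrightarrow> mate (M\<inverse>) b = a"
  unfolding mate_def by (rule the_equality) (auto intro: matching_eq_fst)

lemma funpow_leaves_domain:
  assumes "finite A" "x \<in> A"
    and maps: "\<And>y. y \<in> A \<Longrightarrow> y \<in> D \<Longrightarrow> h y \<in> A"
    and inj: "inj_on h (A \<inter> D)" and start: "x \<notin> h ` (A \<inter> D)"
  shows "\<exists>N. (h ^^ N) x \<notin> D"
proof (rule ccontr)
  assume "\<not> ?thesis"
  then have D: "(h ^^ t) x \<in> D" for t by blast
  have AD: "(h ^^ t) x \<in> A \<inter> D" for t
  proof (induction t)
    case 0
    show ?case using assms(2) D[of 0] by simp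
  next
    case (Suc t)
    then show ?case using D[of "Suc t"] maps by simp
  qed
  have distinct: "(h ^^ a) x \<noteq> (h ^^ b) x" if "a < b" for a b
    using that
  proof (induction a arbitrary: b)
    case 0
    then obtain b' where "b = Suc b'" using gr0_implies_Suc by blast
    then have "(h ^^ b) x \<in> h ` (A \<inter> D)" using AD by simp
    then show ?case using start by auto
  next
    case (Suc a)
    then obtain b' where b': "b = Suc b'" "a < b'" using Suc_less_eq2 by blast
    have "h ((h ^^ a) x) \<noteq> h ((h ^^ b') x)"
      using Suc.IH[OF b'(2)] inj AD by (meson inj_onD)
    then show ?case using b'(1) by simp
  qed
  have "inj (\<lambda>t. (h ^^ t) x)"
    by (rule injI) (metis distinct linorder_neqE_nat)
  moreover have "range (\<lambda>t. (h ^^ t) x) \<subseteq> A" using AD by blast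
  ultimately have "finite (UNIV :: nat set)"
    using assms(1) finite_imageD finite_subset by blast
  then show False by simp
qed

locale signed_units =
  fixes U :: "'u set" and sg :: "'u \<Rightarrow> int"
  assumes finite_U: "finite U" and sg_cases: "u \<in> U \<Longrightarrow> sg u = 1 \<or> sg u = -1"
begin

definition signed_matching :: "('u \<times> 'u) set \<Rightarrow> bool" where
  "signed_matching M \<longleftrightarrow> matching M \<and> M \<subseteq> U \<times> U \<and> (\<forall>(a, b)\<in>M. sg a = 1 \<and> sg b = -1)"

lemma signed_matchingD:
  assumes "signed_matching M" "(a, b) \<in> M"
  shows "a \<in> U" "b \<in> U" "sg a = 1" "sg b = -1"
  using assms unfolding signed_matching_def by auto

lemma signed_matching_matching: "signed_matching M \<Longrightarrow> matching M"
  unfolding signed_matching_def by blast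

lemma matched_subset_U: "signed_matching M \<Longrightarrow> matched M \<subseteq> U"
  unfolding signed_matching_def matched_def by force

lemma signed_matching_disjoint:
  assumes "signed_matching M"
  shows "fst ` M \<inter> snd ` M = {}"
proof -
  have "sg x = 1" if "x \<in> fst ` M" for x using that signed_matchingD(3)[OF assms] by force
  moreover have "sg x = -1" if "x \<in> snd ` M" for x using that signed_matchingD(4)[OF assms] by force
  ultimately show ?thesis by force
qed

lemma closed_under_U: "signed_matching M \<Longrightarrow> closed_under M U"
  unfolding closed_under_def by (auto dest: signed_matchingD)

lemma sum_sign_matched:
  assumes "signed_matching M"
  shows "(\<Sum>w\<in>matched M. sg w) = 0"
proof -
  have "finite (matched M)" using matched_subset_U[OF assms] finite_U finite_subset by blast
  moreover have "closed_under M (matched M)"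
    unfolding closed_under_def matched_def by force
  moreover have "sg (fst p) + sg (snd p) = 0" if "p \<in> M" for p
    using that signed_matchingD[OF assms] by (cases p) auto
  ultimately show ?thesis
    using sum_split_matching[of "matched M" M sg] signed_matching_matching[OF assms]
      signed_matching_disjoint[OF assms] by simp
qed

lemma signed_matching_UN:
  assumes "\<And>i. i \<in> I \<Longrightarrow> signed_matching (M i)"
    and "\<And>i i'. i \<in> I \<Longrightarrow> i' \<in> I \<Longrightarrow> i \<noteq> i' \<Longrightarrow> matched (M i) \<inter> matched (M i') = {}"
  shows "signed_matching (\<Union>i\<in>I. M i)"
  unfolding signed_matching_def
proof (intro conjI)
  show "matching (\<Union>i\<in>I. M i)"
    using assms by (intro matching_UN) (auto simp: signed_matching_def)
  show "(\<Union>i\<in>I. M i) \<subseteq> U \<times> U"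
    using assms(1) unfolding signed_matching_def by blast
  show "\<forall>(a, b)\<in>(\<Union>i\<in>I. M i). sg a = 1 \<and> sg b = -1"
  proof
    fix p assume "p \<in> (\<Union>i\<in>I. M i)"
    then obtain i where "i \<in> I" "p \<in> M i" by blast
    then show "case p of (a, b) \<Rightarrow> sg a = 1 \<and> sg b = -1"
      using signed_matchingD(3,4)[OF assms(1)] by (cases p) auto
  qed
qed

lemma signed_matching_Un:
  assumes "signed_matching A" "signed_matching B" "matched A \<inter> matched B = {}"
  shows "signed_matching (A \<union> B)"
  unfolding signed_matching_def
proof (intro conjI)
  show "matching (A \<union> B)"
    using assms signed_matching_matching matching_Un by blast
  show "A \<union> B \<subseteq> U \<times> U"
    using assms(1,2) unfolding signed_matching_def by blast
  show "\<forall>(a, b)\<in>A \<union> B. sg a = 1 \<and> sg b = -1"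
    using signed_matchingD(3,4)[OF assms(1)] signed_matchingD(3,4)[OF assms(2)] by blast
qed

lemma balanced_matching_exists:
  assumes "P \<subseteq> U"
  obtains M s where "signed_matching M" "M \<subseteq> P \<times> P" "\<And>w. w \<in> P - matched M \<Longrightarrow> sg w = s"
proof -
  let ?Pos = "{w\<in>P. sg w = 1}" and ?Neg = "{w\<in>P. sg w = -1}"
  have fin: "finite ?Pos" "finite ?Neg" using assms by (auto intro: finite_subset[OF _ finite_U])
  have P_split: "w \<in> ?Pos \<or> w \<in> ?Neg" if "w \<in> P" for w using that assms sg_cases by auto
  show ?thesis
  proof (cases "card ?Pos \<le> card ?Neg")
    case True
    then obtain f where f: "f ` ?Pos \<subseteq> ?Neg" "inj_on f ?Pos" using card_le_inj[OF fin] by auto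
    let ?M = "(\<lambda>a. (a, f a)) ` ?Pos"
    have "signed_matching ?M"
      unfolding signed_matching_def matching_def using f assms by (auto simp: inj_on_def)
    moreover have "sg w = -1" if "w \<in> P - matched ?M" for w
      using that P_split unfolding matched_def by force
    ultimately show ?thesis using that f by blast
  next
    case False
    then obtain f where f: "f ` ?Neg \<subseteq> ?Pos" "inj_on f ?Neg" using card_le_inj[OF fin(2,1)] by auto
    let ?M = "(\<lambda>b. (f b, b)) ` ?Neg"
    have "signed_matching ?M"
      unfolding signed_matching_def matching_def using f assms by (auto simp: inj_on_def)
    moreover have "sg w = 1" if "w \<in> P - matched ?M" for w
      using that P_split unfolding matched_def by force
    ultimately show ?thesis using that f by blast
  qed
qed

lemma unmatched_positive_exists:
  assumes M0: "signed_matching M0" "matched M0 = U"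
    and G: "signed_matching G" "matched G \<noteq> U"
  obtains v where "v \<in> U" "sg v = 1" "v \<notin> matched G"
proof -
  let ?Pos = "{u\<in>U. sg u = 1}" and ?Neg = "{u\<in>U. sg u = -1}"
  have sides: "fst ` M \<subseteq> ?Pos" "snd ` M \<subseteq> ?Neg" if "signed_matching M" for M
    using signed_matchingD[OF that] by auto
  have card_sides: "card (fst ` M) = card (snd ` M)" if "signed_matching M" for M
    using signed_matching_matching[OF that] unfolding matching_def by (simp add: card_image)
  have "fst ` M0 = ?Pos" "snd ` M0 = ?Neg"
    using sides[OF M0(1)] M0(2) unfolding matched_def by auto
  then have card_Pos_Neg: "card ?Pos = card ?Neg" using card_sides[OF M0(1)] by simp
  show ?thesis
  proof (rule ccontr)
    assume "\<not> thesis"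
    then have "?Pos \<subseteq> matched G" using that by blast
    moreover have "?Pos \<inter> snd ` G = {}" using sides[OF G(1)] by auto
    ultimately have fst_G: "fst ` G = ?Pos" using sides[OF G(1)] unfolding matched_def by blast
    have "card (snd ` G) = card ?Neg" using card_sides[OF G(1)] fst_G card_Pos_Neg by simp
    then have "snd ` G = ?Neg" using sides[OF G(1)] finite_U by (simp add: card_subset_eq)
    then have "matched G = ?Pos \<union> ?Neg" using fst_G unfolding matched_def by simp
    also have "\<dots> = U" using sg_cases by blast
    finally show False using G(2) by blast
  qed
qed

end

section \<open>Alternating paths\<close>

locale alternating_walk = signed_units U sg for U :: "'u set" and sg +
  fixes M0 G :: "('u \<times> 'u) set" and v0 :: 'u
  assumes M0: "signed_matching M0" "matched M0 = U"
    and G: "signed_matching G"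
    and start: "v0 \<in> U" "sg v0 = 1" "v0 \<notin> matched G"
begin

definition step :: "'u \<Rightarrow> 'u" where
  "step y = mate (G\<inverse>) (mate M0 y)"

definition walk :: "nat \<Rightarrow> 'u" where
  "walk t = (step ^^ t) v0"

definition exit_time :: nat where
  "exit_time = (LEAST t. mate M0 (walk t) \<notin> snd ` G)"

definition path :: "'u set" where
  "path = {walk t |t. t \<le> exit_time} \<union> {mate M0 (walk t) |t. t \<le> exit_time}"

lemma M0_pair: "(a, b) \<in> M0 \<Longrightarrow> b = mate M0 a"
  using mate_eq signed_matching_matching[OF M0(1)] by metis

lemma M0_positive_pair:
  assumes "u \<in> U" "sg u = 1"
  shows "(u, mate M0 u) \<in> M0" "mate M0 u \<in> U" "sg (mate M0 u) = -1"
proof -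
  obtain p where p: "p \<in> M0" "u = fst p \<or> u = snd p" using assms(1) M0(2) unfolding matched_def by blast
  have "u = fst p" using p assms(2) signed_matchingD(4)[OF M0(1)] by (cases p) force
  then show "(u, mate M0 u) \<in> M0" using p M0_pair by (metis prod.collapse)
  then show "mate M0 u \<in> U" "sg (mate M0 u) = -1" using signed_matchingD[OF M0(1)] by blast+
qed

lemma step_pair:
  assumes "mate M0 u \<in> snd ` G"
  shows "(step u, mate M0 u) \<in> G"
proof -
  obtain a where "(a, mate M0 u) \<in> G" using assms by force
  then show ?thesis
    unfolding step_def using mate_converse_eq signed_matching_matching[OF G] by metis
qed

lemma walk_Suc: "walk (Suc t) = step (walk t)"
  unfolding walk_def by simp

lemma walk_exits: "\<exists>t. mate M0 (walk t) \<notin> snd ` G"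
proof -
  let ?Pos = "{u\<in>U. sg u = 1}" and ?D = "{y. mate M0 y \<in> snd ` G}"
  have maps: "step y \<in> ?Pos" if "y \<in> ?D" for y
    using signed_matchingD[OF G step_pair] that by auto
  have inj: "inj_on step (?Pos \<inter> ?D)"
  proof (rule inj_onI)
    fix y y' assume y: "y \<in> ?Pos \<inter> ?D" and y': "y' \<in> ?Pos \<inter> ?D" and eq: "step y = step y'"
    have "(step y, mate M0 y) \<in> G" "(step y', mate M0 y') \<in> G" using y y' step_pair by auto
    then have "mate M0 y = mate M0 y'"
      using eq matching_eq_snd[OF signed_matching_matching[OF G]] by metis
    moreover have "(y, mate M0 y) \<in> M0" "(y', mate M0 y') \<in> M0"
      using y y' M0_positive_pair(1) by auto
    ultimately show "y = y'" using matching_eq_fst[OF signed_matching_matching[OF M0(1)]] by metis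
  qed
  have "step y \<in> matched G" if "y \<in> ?D" for y
    using step_pair that unfolding matched_def by force
  then have "v0 \<notin> step ` (?Pos \<inter> ?D)" using start(3) by blast
  then have "\<exists>t. (step ^^ t) v0 \<notin> ?D"
    by (intro funpow_leaves_domain[of ?Pos]) (use finite_U start maps inj in auto)
  then show ?thesis unfolding walk_def by simp
qed

lemma before_exit: "t < exit_time \<Longrightarrow> mate M0 (walk t) \<in> snd ` G"
  unfolding exit_time_def using not_less_Least by blast

lemma at_exit: "mate M0 (walk exit_time) \<notin> snd ` G"
  unfolding exit_time_def using walk_exits by (rule LeastI_ex)

lemma walk_positive: "t \<le> exit_time \<Longrightarrow> walk t \<in> U \<and> sg (walk t) = 1"
proof (induction t)
  case 0
  show ?case using start by (simp add: walk_def)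
next
  case (Suc t)
  then have "(walk (Suc t), mate M0 (walk t)) \<in> G"
    using before_exit step_pair walk_Suc by simp
  then show ?case using signed_matchingD[OF G] by blast
qed

lemma path_subset: "path \<subseteq> U"
  unfolding path_def using walk_positive M0_positive_pair(2) by blast

lemma v0_in_path: "v0 \<in> path"
  unfolding path_def walk_def by force

lemma path_closed_M0: "closed_under M0 path"
  unfolding closed_under_def
proof (clarify)
  fix a b assume ab: "(a, b) \<in> M0"
  have sg_ab: "sg a = 1" "sg b = -1" using signed_matchingD[OF M0(1) ab] by auto
  show "a \<in> path \<longleftrightarrow> b \<in> path"
  proof
    assume "a \<in> path"
    then obtain t where "t \<le> exit_time" "a = walk t"
      unfolding path_def using sg_ab walk_positive M0_positive_pair(3) by force
    then show "b \<in> path" using M0_pair[OF ab] unfolding path_def by blast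
  next
    assume "b \<in> path"
    then obtain t where t: "t \<le> exit_time" "b = mate M0 (walk t)"
      unfolding path_def using sg_ab walk_positive by force
    then have "a = walk t"
      using ab M0_positive_pair(1) walk_positive matching_eq_fst[OF signed_matching_matching[OF M0(1)]]
      by metis
    then show "a \<in> path" using t(1) unfolding path_def by blast
  qed
qed

lemma path_closed_G: "closed_under G path"
  unfolding closed_under_def
proof (clarify)
  fix a b assume ab: "(a, b) \<in> G"
  have sg_ab: "sg a = 1" "sg b = -1" using signed_matchingD[OF G ab] by auto
  have matchingG: "matching G" using signed_matching_matching[OF G] .
  show "a \<in> path \<longleftrightarrow> b \<in> path"
  proof
    assume "a \<in> path"
    then obtain t where t: "t \<le> exit_time" "a = walk t"
      unfolding path_def using sg_ab walk_positive M0_positive_pair(3) by force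
    have "a \<in> matched G" using ab unfolding matched_def by force
    then obtain t' where t': "t = Suc t'" using t start(3) by (cases t) (auto simp: walk_def)
    then have "(a, mate M0 (walk t')) \<in> G"
      using t before_exit step_pair walk_Suc by simp
    then have "b = mate M0 (walk t')" using ab matching_eq_snd[OF matchingG] by blast
    then show "b \<in> path" using t t' unfolding path_def by auto
  next
    assume "b \<in> path"
    then obtain t where t: "t \<le> exit_time" "b = mate M0 (walk t)"
      unfolding path_def using sg_ab walk_positive by force
    have "t \<noteq> exit_time" using at_exit ab t(2) by force
    then have "(walk (Suc t), b) \<in> G" using t before_exit step_pair walk_Suc by simp
    then have "a = walk (Suc t)" using ab matching_eq_fst[OF matchingG] by blast
    then show "a \<in> path" using t \<open>t \<noteq> exit_time\<close> unfolding path_def by auto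
  qed
qed

lemma path_unmatched: "path - matched G = {v0, mate M0 (walk exit_time)}"
proof
  have walk_matched: "walk (Suc t) \<in> matched G" if "t < exit_time" for t
  proof -
    have "(walk (Suc t), mate M0 (walk t)) \<in> G"
      using before_exit[OF that] step_pair walk_Suc by simp
    then show ?thesis unfolding matched_def by (metis UnI1 fst_conv image_eqI)
  qed
  have mate_matched: "mate M0 (walk t) \<in> matched G" if "t < exit_time" for t
    using before_exit[OF that] unfolding matched_def by blast
  show "path - matched G \<subseteq> {v0, mate M0 (walk exit_time)}"
  proof
    fix x assume x: "x \<in> path - matched G"
    then obtain t where t: "t \<le> exit_time" "x = walk t \<or> x = mate M0 (walk t)"
      unfolding path_def by blast
    show "x \<in> {v0, mate M0 (walk exit_time)}"
    proof (cases "x = walk t")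
      case True
      have "t = 0"
      proof (rule ccontr)
        assume "t \<noteq> 0"
        then obtain t' where "t = Suc t'" using not0_implies_Suc by blast
        then show False using x t(1) True walk_matched[of t'] by simp
      qed
      then show ?thesis using True by (simp add: walk_def)
    next
      case False
      then have x_mate: "x = mate M0 (walk t)" using t(2) by blast
      have "t = exit_time"
      proof (rule ccontr)
        assume "t \<noteq> exit_time"
        then have "t < exit_time" using t(1) by simp
        then show False using x x_mate mate_matched by blast
      qed
      then show ?thesis using x_mate by simp
    qed
  qed
next
  have "sg (mate M0 (walk exit_time)) = -1"
    using walk_positive[of exit_time] M0_positive_pair(3) by simp
  then have "mate M0 (walk exit_time) \<notin> fst ` G"
    using signed_matchingD(3)[OF G] by (metis imageE prod.collapse one_neq_neg_one)
  then have "mate M0 (walk exit_time) \<notin> matched G" using at_exit unfolding matched_def by blast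
  moreover have "mate M0 (walk exit_time) \<in> path" unfolding path_def by blast
  ultimately show "{v0, mate M0 (walk exit_time)} \<subseteq> path - matched G"
    using v0_in_path start(3) by blast
qed

end

context signed_units
begin

text \<open>If \<open>G\<close> is perfect, \<open>U\<close> itself will do; otherwise follow the alternating path
  starting at a positive unit left unmatched by \<open>G\<close>.\<close>

lemma alternating_component_exists:
  assumes M0: "signed_matching M0" "matched M0 = U" and G: "signed_matching G" and "U \<noteq> {}"
  obtains S where "S \<subseteq> U" "S \<noteq> {}" "closed_under M0 S" "closed_under G S"
    "S - matched G = {} \<or> (\<exists>a b. S - matched G = {a, b} \<and> sg a = 1 \<and> sg b = -1)"
proof (cases "matched G = U")
  case True
  then show ?thesis using that[of U] closed_under_U M0(1) G assms(4) by blast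
next
  case False
  obtain v0 where v0: "v0 \<in> U" "sg v0 = 1" "v0 \<notin> matched G"
    using unmatched_positive_exists[OF M0 G False] by blast
  interpret W: alternating_walk U sg M0 G v0
    by unfold_locales (use M0 G v0 in auto)
  have "sg (mate M0 (W.walk W.exit_time)) = -1"
    using W.walk_positive W.M0_positive_pair(3) by simp
  then show ?thesis
    using that[of W.path] W.path_subset W.v0_in_path W.path_closed_M0 W.path_closed_G
      W.path_unmatched v0(2) by blast
qed


end

section \<open>Laminar families and sign-compatible matchings\<close>

definition laminar :: "'a set set \<Rightarrow> bool" where
  "laminar T \<longleftrightarrow> (\<forall>K\<in>T. \<forall>L\<in>T. K \<inter> L \<noteq> {} \<longrightarrow> K \<subseteq> L \<or> L \<subseteq> K)"

lemma is_tree_laminar: "is_tree T \<Longrightarrow> laminar T"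
  unfolding is_tree_def laminar_def by blast

definition children :: "'a set set \<Rightarrow> 'a set \<Rightarrow> 'a set set" where
  "children T X = {C\<in>T. C \<subset> X \<and> (\<forall>C'\<in>T. C \<subseteq> C' \<and> C' \<subset> X \<longrightarrow> C' = C)}"

lemma children_subset: "C \<in> children T X \<Longrightarrow> C \<in> T \<and> C \<subset> X"
  unfolding children_def by blast

lemma children_disjoint:
  assumes "laminar T" "C \<in> children T X" "C' \<in> children T X" "C \<noteq> C'"
  shows "C \<inter> C' = {}"
proof (rule ccontr)
  assume "C \<inter> C' \<noteq> {}"
  then have "C \<subseteq> C' \<or> C' \<subseteq> C"
    using assms(1) children_subset[OF assms(2)] children_subset[OF assms(3)] unfolding laminar_def by blast
  then show False using assms(2-4) unfolding children_def by blast
qed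

lemma children_cover:
  assumes "finite T" "K \<in> T" "K \<subset> X"
  obtains C where "C \<in> children T X" "K \<subseteq> C"
proof -
  define A where "A = {C\<in>T. K \<subseteq> C \<and> C \<subset> X}"
  have "finite A" unfolding A_def using assms(1) by simp
  moreover have "K \<in> A" unfolding A_def using assms(2,3) by blast
  ultimately obtain C where C: "C \<in> A" and C_max: "\<forall>C'\<in>A. C \<le> C' \<longrightarrow> C = C'"
    using finite_has_maximal by blast
  have "\<forall>C'\<in>T. C \<subseteq> C' \<and> C' \<subset> X \<longrightarrow> C' = C"
  proof (intro ballI impI)
    fix C' assume C': "C' \<in> T" "C \<subseteq> C' \<and> C' \<subset> X"
    then have "C' \<in> A" using C unfolding A_def by blast
    then show "C' = C" using C_max C' by blast
  qed
  then have "C \<in> children T X" using C unfolding children_def A_def by blast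
  with C show ?thesis unfolding A_def by (intro that) blast+
qed

definition sign_agrees :: "int \<Rightarrow> int \<Rightarrow> bool" where
  "sign_agrees c z \<longleftrightarrow> (0 \<le> c \<longrightarrow> 0 \<le> z) \<and> (c \<le> 0 \<longrightarrow> z \<le> 0)"

lemma sign_agrees_sum:
  assumes "\<And>x. x \<in> A \<Longrightarrow> sign_agrees c (f x)"
  shows "sign_agrees c (\<Sum>x\<in>A. f x)"
  unfolding sign_agrees_def
proof (intro conjI impI)
  show "0 \<le> (\<Sum>x\<in>A. f x)" if "0 \<le> c"
    using assms that unfolding sign_agrees_def by (intro sum_nonneg) blast
  show "(\<Sum>x\<in>A. f x) \<le> 0" if "c \<le> 0"
    using assms that unfolding sign_agrees_def by (intro sum_nonpos) blast
qed

lemma sign_agrees_add: "sign_agrees c x \<Longrightarrow> sign_agrees c y \<Longrightarrow> sign_agrees c (x + y)"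
  unfolding sign_agrees_def by linarith

definition conforms :: "('a \<Rightarrow> int) \<Rightarrow> ('a \<Rightarrow> int) \<Rightarrow> 'a set \<Rightarrow> bool" where
  "conforms c d I \<longleftrightarrow>
     (0 \<le> (\<Sum>j\<in>I. d j) \<longrightarrow> 0 \<le> (\<Sum>j\<in>I. c j) \<and> (\<Sum>j\<in>I. c j) \<le> (\<Sum>j\<in>I. d j)) \<and>
     ((\<Sum>j\<in>I. d j) \<le> 0 \<longrightarrow> (\<Sum>j\<in>I. d j) \<le> (\<Sum>j\<in>I. c j) \<and> (\<Sum>j\<in>I. c j) \<le> 0)"

locale labelled_units = signed_units U sg for U :: "'u set" and sg +
  fixes var :: "'u \<Rightarrow> 'v"
begin

definition units_in :: "'v set \<Rightarrow> 'u set" where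
  "units_in X = {u\<in>U. var u \<in> X}"

definition charge :: "'v set \<Rightarrow> int" where
  "charge K = (\<Sum>u\<in>units_in K. sg u)"

definition weight :: "'v set \<Rightarrow> 'u \<Rightarrow> int" where
  "weight K u = (if var u \<in> K then sg u else 0)"

definition signed_count :: "'u set \<Rightarrow> 'v \<Rightarrow> int" where
  "signed_count W j = (\<Sum>u\<in>{u\<in>W. var u = j}. sg u)"

definition exposed :: "('u \<times> 'u) set \<Rightarrow> 'v set \<Rightarrow> 'u \<Rightarrow> bool" where
  "exposed M K w \<longleftrightarrow> var w \<in> K \<and> (\<forall>v. (w, v) \<in> M \<or> (v, w) \<in> M \<longrightarrow> var v \<notin> K)"

definition compatible_matching :: "'v set set \<Rightarrow> 'v set \<Rightarrow> ('u \<times> 'u) set \<Rightarrow> bool" where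
  "compatible_matching T X M \<longleftrightarrow> signed_matching M \<and> M \<subseteq> units_in X \<times> units_in X \<and>
     (\<forall>K\<in>T. K \<subseteq> X \<longrightarrow> (\<forall>w\<in>U. exposed M K w \<longrightarrow> sg w * charge K > 0))"

lemma exposed_mono: "M' \<subseteq> M \<Longrightarrow> exposed M K w \<Longrightarrow> exposed M' K w"
  unfolding exposed_def by blast

lemma charge_eq_sum_weight: "charge K = (\<Sum>u\<in>U. weight K u)"
  unfolding charge_def weight_def units_in_def using finite_U by (simp add: sum.inter_filter)

lemma charge_unmatched:
  assumes "signed_matching M" "matched M \<subseteq> units_in X"
    and "\<And>w. w \<in> units_in X - matched M \<Longrightarrow> sg w = s"
  shows "charge X = s * int (card (units_in X - matched M))"
proof -
  have fin: "finite (units_in X)" unfolding units_in_def using finite_U by simp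
  have "charge X = (\<Sum>u\<in>matched M. sg u) + (\<Sum>u\<in>units_in X - matched M. sg u)"
    unfolding charge_def using sum.subset_diff[OF assms(2) fin] by (simp add: add.commute)
  then show ?thesis using sum_sign_matched[OF assms(1)] assms(3) by simp
qed

lemma units_in_mono: "C \<subseteq> X \<Longrightarrow> units_in C \<subseteq> units_in X"
  unfolding units_in_def by blast


lemma exposed_in_root:
  assumes M: "signed_matching M" "M \<subseteq> units_in X \<times> units_in X"
    and s: "\<And>u. u \<in> units_in X - matched M \<Longrightarrow> sg u = s"
    and w: "w \<in> U" "exposed M X w"
  shows "sg w * charge X > 0"
proof -
  have "w \<notin> matched M"
  proof
    assume "w \<in> matched M"
    then obtain v where "(w, v) \<in> M \<or> (v, w) \<in> M" unfolding matched_def by force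
    moreover from this have "var v \<in> X" using M(2) unfolding units_in_def by blast
    ultimately show False using w(2) unfolding exposed_def by blast
  qed
  then have w_unmatched: "w \<in> units_in X - matched M"
    using w unfolding exposed_def units_in_def by blast
  have "charge X = s * int (card (units_in X - matched M))"
    using charge_unmatched[OF M(1) matched_subset[OF M(2)] s] .
  moreover have "sg w = s" using s w_unmatched .
  moreover have "card (units_in X - matched M) > 0"
    using w_unmatched finite_U unfolding units_in_def by (auto simp: card_gt_0_iff)
  ultimately show ?thesis using sg_cases[OF w(1)] by auto
qed

lemma compatible_matching_step:
  assumes "finite T" "laminar T" "X \<in> T"
    and IH: "\<And>C. C \<in> T \<Longrightarrow> C \<subset> X \<Longrightarrow> \<exists>M. compatible_matching T C M"
  shows "\<exists>M. compatible_matching T X M"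
proof -
  obtain Mf where Mf: "\<And>C. C \<in> children T X \<Longrightarrow> compatible_matching T C (Mf C)"
    using IH children_subset by metis
  have Mf_in: "Mf C \<subseteq> units_in C \<times> units_in C" "units_in C \<subseteq> units_in X"
    if "C \<in> children T X" for C
    using Mf[OF that] units_in_mono children_subset[OF that] unfolding compatible_matching_def by auto
  define Mc where "Mc = (\<Union>C\<in>children T X. Mf C)"
  have Mc: "signed_matching Mc" unfolding Mc_def
  proof (rule signed_matching_UN)
    show "signed_matching (Mf C)" if "C \<in> children T X" for C
      using Mf[OF that] unfolding compatible_matching_def by blast
    show "matched (Mf C) \<inter> matched (Mf C') = {}"
      if "C \<in> children T X" "C' \<in> children T X" "C \<noteq> C'" for C C'
      using matched_subset[OF Mf_in(1)[OF that(1)]] matched_subset[OF Mf_in(1)[OF that(2)]]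
        children_disjoint[OF assms(2) that] unfolding units_in_def by blast
  qed
  define P where "P = units_in X - matched Mc"
  obtain Mp s where Mp: "signed_matching Mp" "Mp \<subseteq> P \<times> P"
    and s: "\<And>w. w \<in> P - matched Mp \<Longrightarrow> sg w = s"
    using balanced_matching_exists[of P] unfolding P_def units_in_def by blast
  define M where "M = Mc \<union> Mp"
  have M_in: "M \<subseteq> units_in X \<times> units_in X"
    unfolding M_def Mc_def using Mf_in Mp(2) unfolding P_def by blast
  have "matched Mp \<subseteq> P" using matched_subset[OF Mp(2)] .
  then have M: "signed_matching M"
    unfolding M_def P_def by (intro signed_matching_Un[OF Mc Mp(1)]) blast
  have "sg w * charge K > 0" if K: "K \<in> T" "K \<subseteq> X" and w: "w \<in> U" "exposed M K w" for K w
  proof (cases "K = X")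
    case True
    have "units_in X - matched M \<subseteq> P - matched Mp" unfolding P_def M_def matched_def by blast
    then have "sg u = s" if "u \<in> units_in X - matched M" for u using s that by blast
    then show ?thesis using exposed_in_root[OF M M_in] w True by blast
  next
    case False
    then obtain C where C: "C \<in> children T X" "K \<subseteq> C"
      using children_cover[OF assms(1) K(1)] K(2) by blast
    have "Mf C \<subseteq> M" using C(1) unfolding M_def Mc_def by blast
    then have "exposed (Mf C) K w" using exposed_mono w(2) by blast
    then show ?thesis using Mf[OF C(1)] K(1) w(1) C(2) unfolding compatible_matching_def by blast
  qed
  then show ?thesis using M M_in unfolding compatible_matching_def by blast
qed

lemma compatible_matching_exists:
  assumes "finite T" "laminar T" "X \<in> T"
  shows "\<exists>M. compatible_matching T X M"
  using assms(3)
proof (induction X rule: measure_induct_rule[where f = "\<lambda>X. card {K\<in>T. K \<subseteq> X}"])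
  case (less X)
  show ?case
  proof (rule compatible_matching_step[OF assms(1,2) less.prems])
    fix C assume C: "C \<in> T" "C \<subset> X"
    have "{K\<in>T. K \<subseteq> C} \<subseteq> {K\<in>T. K \<subseteq> X}" using C(2) by auto
    moreover have "X \<in> {K\<in>T. K \<subseteq> X} - {K\<in>T. K \<subseteq> C}" using less.prems C(2) by auto
    ultimately have "{K\<in>T. K \<subseteq> C} \<subset> {K\<in>T. K \<subseteq> X}" by blast
    then have "card {K\<in>T. K \<subseteq> C} < card {K\<in>T. K \<subseteq> X}"
      using assms(1) by (simp add: psubset_card_mono)
    then show "\<exists>M. compatible_matching T C M" using less.IH C(1) by blast
  qed
qed

lemma sum_signed_count:
  assumes "W \<subseteq> U" "finite K"
  shows "(\<Sum>j\<in>K. signed_count W j) = (\<Sum>u\<in>W. weight K u)"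
proof -
  have fin: "finite W" using assms(1) finite_U finite_subset by blast
  have "(\<Sum>u\<in>W. weight K u) = (\<Sum>u\<in>{u\<in>W. var u \<in> K}. sg u)"
    unfolding weight_def using fin by (simp add: sum.inter_filter)
  also have "\<dots> = (\<Sum>j\<in>K. \<Sum>u\<in>{u\<in>{u\<in>W. var u \<in> K}. var u = j}. sg u)"
    by (rule sum.group[symmetric]) (use fin assms(2) in auto)
  also have "\<dots> = (\<Sum>j\<in>K. signed_count W j)"
    unfolding signed_count_def by (intro sum.cong refl arg_cong2[where f = sum]) auto
  finally show ?thesis by simp
qed

lemma pair_weight_agrees:
  assumes N: "signed_matching N" "(a, b) \<in> N"
    and exposed_sign: "\<And>w. w \<in> {a, b} \<Longrightarrow> exposed N K w \<Longrightarrow> sg w * c > 0"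
  shows "sign_agrees c (weight K a + weight K b)"
proof -
  have matching_N: "matching N" using signed_matching_matching[OF N(1)] .
  have sg_ab: "sg a = 1" "sg b = -1" using signed_matchingD[OF N] by auto
  have mates: "v = b" if "(a, v) \<in> N \<or> (v, a) \<in> N" for v
    using that N(2) matching_eq_snd[OF matching_N] signed_matchingD(4)[OF N(1), of v a] sg_ab(1)
    by auto
  have comates: "v = a" if "(b, v) \<in> N \<or> (v, b) \<in> N" for v
    using that N(2) matching_eq_fst[OF matching_N] signed_matchingD(3)[OF N(1), of b v] sg_ab(2)
    by auto
  consider "var a \<in> K" "var b \<notin> K" | "var b \<in> K" "var a \<notin> K" | "var a \<in> K \<longleftrightarrow> var b \<in> K"
    by blast
  then show ?thesis
  proof cases
    case 1
    then have "exposed N K a" unfolding exposed_def using mates by blast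
    then have "c > 0" using exposed_sign[of a] sg_ab by simp
    then show ?thesis using 1 sg_ab unfolding sign_agrees_def weight_def by simp
  next
    case 2
    then have "exposed N K b" unfolding exposed_def using comates by blast
    then have "c < 0" using exposed_sign[of b] sg_ab by simp
    then show ?thesis using 2 sg_ab unfolding sign_agrees_def weight_def by simp
  next
    case 3
    then show ?thesis using sg_ab unfolding sign_agrees_def weight_def by auto
  qed
qed

lemma closed_weight_agrees:
  assumes N: "signed_matching N" and W: "W \<subseteq> U" "closed_under N W"
    and exposed_sign: "\<And>w. w \<in> W \<Longrightarrow> exposed N K w \<Longrightarrow> sg w * c > 0"
  shows "sign_agrees c (\<Sum>w\<in>W. weight K w)"
proof -
  have matching_N: "matching N" using signed_matching_matching[OF N] .
  have pair: "sign_agrees c (weight K (fst p) + weight K (snd p))" if p: "p \<in> N" "fst p \<in> W" for p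
  proof -
    obtain a b where ab: "p = (a, b)" by (cases p) auto
    have "b \<in> W" using W(2) p ab unfolding closed_under_def by auto
    then show ?thesis
      using pair_weight_agrees[OF N, of a b K c] exposed_sign p ab by auto
  qed
  have single: "sign_agrees c (weight K w)" if w: "w \<in> W - matched N" for w
  proof (cases "var w \<in> K")
    case True
    then have "exposed N K w" using w unfolding exposed_def matched_def by force
    then have "sg w * c > 0" using exposed_sign w by blast
    moreover have "sg w = 1 \<or> sg w = -1" using sg_cases W(1) w by blast
    ultimately show ?thesis using True unfolding sign_agrees_def weight_def by auto
  qed (simp add: sign_agrees_def weight_def)
  have "finite W" using W(1) finite_U finite_subset by blast
  then have "(\<Sum>w\<in>W. weight K w) = (\<Sum>p\<in>{p\<in>N. fst p \<in> W}. weight K (fst p) + weight K (snd p))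
      + (\<Sum>w\<in>W - matched N. weight K w)"
    by (rule sum_split_matching[OF _ matching_N signed_matching_disjoint[OF N] W(2)])
  then show ?thesis
    using sign_agrees_add sign_agrees_sum[of "{p\<in>N. fst p \<in> W}"] sign_agrees_sum[of "W - matched N"]
      pair single by simp
qed

lemma closed_set_conforms:
  assumes N: "signed_matching N" and W: "W \<subseteq> U" "closed_under N W" and "finite K"
    and exposed_sign: "\<And>w. w \<in> U \<Longrightarrow> exposed N K w \<Longrightarrow> sg w * charge K > 0"
  shows "conforms (signed_count W) (signed_count U) K"
proof -
  have "closed_under N (U - W)"
    using W(2) closed_under_U[OF N] unfolding closed_under_def by blast
  then have "sign_agrees (charge K) (\<Sum>w\<in>U - W. weight K w)"
    by (rule closed_weight_agrees[OF N Diff_subset]) (use exposed_sign in blast)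
  moreover have "sign_agrees (charge K) (\<Sum>w\<in>W. weight K w)"
    using closed_weight_agrees[OF N W] exposed_sign W(1) by blast
  moreover have "charge K = (\<Sum>w\<in>W. weight K w) + (\<Sum>w\<in>U - W. weight K w)"
    unfolding charge_eq_sum_weight using sum.subset_diff[OF W(1) finite_U] by (simp add: add.commute)
  ultimately show ?thesis
    unfolding conforms_def sum_signed_count[OF W(1) assms(4)] sum_signed_count[OF subset_refl assms(4)]
      charge_eq_sum_weight[symmetric] sign_agrees_def by linarith
qed

end

section \<open>Counting unit moves\<close>

lemma net_inflow_count:
  fixes ps :: "(nat \<times> nat) list"
  assumes "\<forall>(a, b)\<in>set ps. b = i \<longrightarrow> a = i"
  shows "(\<Sum>(a, b)\<leftarrow>ps. unit_vec b i - unit_vec a i) = - int (length (filter (\<lambda>(a, b). a = i \<and> b \<noteq> i) ps))"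
  using assms by (induction ps) (auto simp: unit_vec_def split: if_splits)

lemma out_moves_bounds:
  fixes ps :: "(nat \<times> nat) list"
  assumes "\<forall>(a, b)\<in>set ps. b = i \<longrightarrow> a = i"
    and "(\<Sum>(a, b)\<leftarrow>ps. unit_vec b i - unit_vec a i) = - D" and "0 < D"
  shows "1 \<le> card {b. (i, b) \<in> set ps \<and> b \<noteq> i} \<and> int (card {b. (i, b) \<in> set ps \<and> b \<noteq> i}) \<le> D"
proof -
  let ?out = "filter (\<lambda>(a, b). a = i \<and> b \<noteq> i) ps"
  have length_out: "int (length ?out) = D" using net_inflow_count[OF assms(1)] assms(2) by simp
  have targets: "{b. (i, b) \<in> set ps \<and> b \<noteq> i} = snd ` set ?out" by force
  have "card (snd ` set ?out) \<le> length ?out"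
    using card_image_le[OF finite_set, of snd ?out] card_length[of ?out] by linarith
  moreover have "?out \<noteq> []" using length_out assms(3) by auto
  then have "set ?out \<noteq> {}" by (metis set_empty)
  then have "card (snd ` set ?out) \<ge> 1" by (simp add: Suc_leI card_gt_0_iff)
  ultimately show ?thesis unfolding targets using length_out by linarith
qed

lemma in_moves_bounds:
  fixes ps :: "(nat \<times> nat) list"
  assumes "\<forall>(a, b)\<in>set ps. a = j \<longrightarrow> b = j"
    and "(\<Sum>(a, b)\<leftarrow>ps. unit_vec b j - unit_vec a j) = D" and "0 < D"
  shows "1 \<le> card {a. (a, j) \<in> set ps \<and> a \<noteq> j} \<and> int (card {a. (a, j) \<in> set ps \<and> a \<noteq> j}) \<le> D"
proof -
  let ?swapped = "map prod.swap ps"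
  have "(\<Sum>(a, b)\<leftarrow>?swapped. unit_vec b j - unit_vec a j) = - (\<Sum>(a, b)\<leftarrow>ps. unit_vec b j - unit_vec a j)"
    by (induction ps) auto
  moreover have "{a. (a, j) \<in> set ps \<and> a \<noteq> j} = {b. (j, b) \<in> set ?swapped \<and> b \<noteq> j}" by auto
  ultimately show ?thesis using out_moves_bounds[of ?swapped j D] assms by auto
qed

lemma move_pairs_bounds:
  fixes ps :: "(nat \<times> nat) list" and q r :: "nat \<Rightarrow> int"
  assumes range: "\<And>a b. (a, b) \<in> set ps \<Longrightarrow> a \<in> {1..n} \<and> b \<in> {1..n}"
    and sign: "\<And>a b i. (a, b) \<in> set ps \<Longrightarrow> i \<in> {1..n} \<Longrightarrow>
      sign_agrees (r i - q i) (unit_vec b i - unit_vec a i)"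
    and net: "\<And>i. i \<in> {1..n} \<Longrightarrow> (\<Sum>(a, b)\<leftarrow>ps. unit_vec b i - unit_vec a i) = r i - q i"
  defines "\<sigma> \<equiv> {(a, b). (a, b) \<in> set ps \<and> a \<noteq> b}"
  shows "\<sigma> \<subseteq> supp_pos n q r \<times> supp_pos n r q"
    and "\<forall>i\<in>supp_pos n q r. 1 \<le> card {b. (i, b) \<in> \<sigma>} \<and> int (card {b. (i, b) \<in> \<sigma>}) \<le> q i - r i"
    and "\<forall>j\<in>supp_pos n r q. 1 \<le> card {a. (a, j) \<in> \<sigma>} \<and> int (card {a. (a, j) \<in> \<sigma>}) \<le> r j - q j"
proof -
  show "\<sigma> \<subseteq> supp_pos n q r \<times> supp_pos n r q"
  proof (clarify)
    fix a b assume "(a, b) \<in> \<sigma>"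
    then have ab: "(a, b) \<in> set ps" "a \<noteq> b" unfolding \<sigma>_def by auto
    show "a \<in> supp_pos n q r \<and> b \<in> supp_pos n r q"
      using range[OF ab(1)] sign[OF ab(1)] ab(2) unfolding supp_pos_def sign_agrees_def unit_vec_def
      by fastforce
  qed
  show "\<forall>i\<in>supp_pos n q r. 1 \<le> card {b. (i, b) \<in> \<sigma>} \<and> int (card {b. (i, b) \<in> \<sigma>}) \<le> q i - r i"
  proof
    fix i assume "i \<in> supp_pos n q r"
    then have i: "i \<in> {1..n}" "r i - q i < 0" unfolding supp_pos_def by auto
    have "\<forall>(a, b)\<in>set ps. b = i \<longrightarrow> a = i"
    proof (clarify)
      fix a assume "(a, i) \<in> set ps"
      from sign[OF this i(1)] show "a = i"
        using i(2) unfolding sign_agrees_def unit_vec_def by (cases "a = i") auto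
    qed
    moreover have "(\<Sum>(a, b)\<leftarrow>ps. unit_vec b i - unit_vec a i) = - (q i - r i)" using net[OF i(1)] by simp
    moreover have "0 < q i - r i" using i(2) by simp
    ultimately have "1 \<le> card {b. (i, b) \<in> set ps \<and> b \<noteq> i} \<and>
        int (card {b. (i, b) \<in> set ps \<and> b \<noteq> i}) \<le> q i - r i"
      by (rule out_moves_bounds)
    moreover have "{b. (i, b) \<in> \<sigma>} = {b. (i, b) \<in> set ps \<and> b \<noteq> i}"
      unfolding \<sigma>_def by (intro Collect_cong) auto
    ultimately show "1 \<le> card {b. (i, b) \<in> \<sigma>} \<and> int (card {b. (i, b) \<in> \<sigma>}) \<le> q i - r i" by simp
  qed
  show "\<forall>j\<in>supp_pos n r q. 1 \<le> card {a. (a, j) \<in> \<sigma>} \<and> int (card {a. (a, j) \<in> \<sigma>}) \<le> r j - q j"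
  proof
    fix j assume "j \<in> supp_pos n r q"
    then have j: "j \<in> {1..n}" "r j - q j > 0" unfolding supp_pos_def by auto
    have "\<forall>(a, b)\<in>set ps. a = j \<longrightarrow> b = j"
    proof (clarify)
      fix b assume "(j, b) \<in> set ps"
      from sign[OF this j(1)] show "b = j"
        using j(2) unfolding sign_agrees_def unit_vec_def by (cases "b = j") auto
    qed
    then have "1 \<le> card {a. (a, j) \<in> set ps \<and> a \<noteq> j} \<and>
        int (card {a. (a, j) \<in> set ps \<and> a \<noteq> j}) \<le> r j - q j"
      using net[OF j(1)] j(2) by (rule in_moves_bounds)
    moreover have "{a. (a, j) \<in> \<sigma>} = {a. (a, j) \<in> set ps \<and> a \<noteq> j}"
      unfolding \<sigma>_def by (intro Collect_cong) auto
    ultimately show "1 \<le> card {a. (a, j) \<in> \<sigma>} \<and> int (card {a. (a, j) \<in> \<sigma>}) \<le> r j - q j" by simp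
  qed
qed

lemma sum_sum_list_swap:
  "(\<Sum>j\<in>A. \<Sum>(c, a, b)\<leftarrow>cs. c j) = (\<Sum>(c, a, b)\<leftarrow>cs. \<Sum>j\<in>A. (c j :: 'a :: comm_monoid_add))"
  by (induction cs) (auto simp: sum.distrib)

section \<open>Conformal decomposition for assignment messages\<close>

locale assignment_msg =
  fixes n m :: nat and k :: "nat \<Rightarrow> nat" and w :: "nat \<Rightarrow> real" and \<I> :: "nat set set"
    and l u :: "nat set \<Rightarrow> int" and T :: "nat \<Rightarrow> nat set set"
  assumes msg: "assignment_message n m k w \<I> l u T"
begin

abbreviation J :: "nat set" where
  "J \<equiv> {1..m}"

abbreviation R :: "nat \<Rightarrow> nat set" where
  "R i \<equiv> goods_var m k i"

definition moves :: "(nat \<Rightarrow> int) \<Rightarrow> nat \<Rightarrow> nat \<Rightarrow> bool" where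
  "moves c a b \<longleftrightarrow> a \<in> {1..n} \<and> b \<in> {1..n} \<and>
     (\<forall>t\<in>{1..n}. (\<Sum>j\<in>R t. c j) = unit_vec b t - unit_vec a t)"

lemma
  shows vars_goods: "\<forall>j\<in>J. k j \<in> {1..n}"
    and family_eq: "\<I> = (\<Union>i\<in>{0..n}. T i)"
    and trees: "\<forall>i\<in>{0..n}. is_tree (T i)"
    and goods_trees: "\<forall>i\<in>{1..n}. T i \<subseteq> Pow (R i) \<and> R i \<in> T i"
    and root_tree: "T 0 \<subseteq> Pow J" "J \<in> T 0" "\<forall>j\<in>J. {j} \<in> T 0"
  using msg unfolding assignment_message_def by simp_all

lemma good_of_var: "j \<in> J \<Longrightarrow> k j \<in> {1..n}"
  using vars_goods by blast

lemma mem_R: "j \<in> R i \<longleftrightarrow> j \<in> J \<and> k j = i"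
  unfolding goods_var_def by simp

lemma R_subset: "R i \<subseteq> J"
  unfolding goods_var_def by blast

lemma R_disjoint: "i \<noteq> i' \<Longrightarrow> R i \<inter> R i' = {}"
  unfolding goods_var_def by blast

lemma family_cases:
  assumes "I \<in> \<I>"
  obtains "I \<in> T 0" | i where "i \<in> {1..n}" "I \<in> T i"
proof -
  have "I \<in> (\<Union>i\<in>{0..n}. T i)" using assms family_eq by simp
  then obtain i where i: "i \<le> n" "I \<in> T i" by auto
  show ?thesis
  proof (cases "i = 0")
    case True
    then show ?thesis using i(2) by (intro that(1)) simp
  next
    case False
    then show ?thesis using i by (intro that(2)[of i]) auto
  qed
qed

lemma tree_laminar: "i \<le> n \<Longrightarrow> laminar (T i)"
  using trees is_tree_laminar by simp

lemma tree_subset_R: "i \<in> {1..n} \<Longrightarrow> I \<in> T i \<Longrightarrow> I \<subseteq> R i"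
  using goods_trees by blast

lemma tree_subset_J:
  assumes "i \<le> n" "I \<in> T i"
  shows "I \<subseteq> J"
proof (cases "i = 0")
  case True
  then show ?thesis using assms(2) root_tree(1) by blast
next
  case False
  then have "I \<subseteq> R i" using assms tree_subset_R[of i I] by simp
  then show ?thesis using R_subset by blast
qed

lemma tree_finite:
  assumes "i \<le> n"
  shows "finite (T i)"
proof (rule finite_subset)
  show "T i \<subseteq> Pow J" using tree_subset_J[OF assms] by blast
qed simp

lemma J_mem: "J \<in> T 0"
  using root_tree(2) .

lemma R_mem: "i \<in> {1..n} \<Longrightarrow> R i \<in> T i"
  using goods_trees by blast

lemma singleton_mem: "j \<in> J \<Longrightarrow> {j} \<in> T 0"
  using root_tree(3) by blast

lemma tree_mem_family: "i \<le> n \<Longrightarrow> I \<in> T i \<Longrightarrow> I \<in> \<I>"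
  unfolding family_eq by (intro UN_I[of i]) simp_all

end

locale difference_units = assignment_msg +
  fixes d :: "nat \<Rightarrow> int"
  assumes balanced: "(\<Sum>j\<in>J. d j) = 0"
begin

abbreviation units :: "(nat \<times> nat) set" where
  "units \<equiv> Sigma J (\<lambda>j. {..<nat \<bar>d j\<bar>})"

abbreviation unit_sign :: "nat \<times> nat \<Rightarrow> int" where
  "unit_sign v \<equiv> sgn (d (fst v))"

sublocale labelled_units units unit_sign fst
  by unfold_locales (auto simp: sgn_if)

lemma signed_count_eq:
  assumes "W \<subseteq> units"
  shows "signed_count W j = sgn (d j) * int (card {v\<in>W. fst v = j})"
  unfolding signed_count_def by simp

lemma signed_count_units: "j \<in> J \<Longrightarrow> signed_count units j = d j"
proof -
  assume j: "j \<in> J"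
  have "{v\<in>units. fst v = j} = {j} \<times> {..<nat \<bar>d j\<bar>}" using j by auto
  then have "signed_count units j = sgn (d j) * int (nat \<bar>d j\<bar>)"
    unfolding signed_count_eq[OF subset_refl] by (simp add: card_cartesian_product)
  also have "\<dots> = d j" by (simp add: sgn_mult_abs)
  finally show ?thesis .
qed

lemma charge_eq_sum: "K \<subseteq> J \<Longrightarrow> charge K = (\<Sum>j\<in>K. d j)"
  using sum_signed_count[OF subset_refl, of K] signed_count_units finite_subset[of K J]
  unfolding charge_eq_sum_weight by (simp add: subset_iff)

lemma signed_count_conforms:
  assumes "signed_matching N" "W \<subseteq> units" "closed_under N W" "K \<subseteq> J"
    and "\<And>v. v \<in> units \<Longrightarrow> exposed N K v \<Longrightarrow> unit_sign v * charge K > 0"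
  shows "conforms (signed_count W) d K"
proof -
  have "finite K" using assms(4) finite_subset by blast
  then have "conforms (signed_count W) (signed_count units) K"
    using closed_set_conforms assms by blast
  moreover have "(\<Sum>j\<in>K. signed_count units j) = (\<Sum>j\<in>K. d j)"
    using signed_count_units assms(4) by (intro sum.cong) auto
  ultimately show ?thesis unfolding conforms_def by simp
qed

lemma root_matching_exists:
  obtains M0 where "signed_matching M0" "matched M0 = units"
    "\<And>I v. I \<in> T 0 \<Longrightarrow> v \<in> units \<Longrightarrow> exposed M0 I v \<Longrightarrow> unit_sign v * charge I > 0"
proof -
  note result = that
  obtain M0 where M0: "compatible_matching (T 0) J M0"
    using compatible_matching_exists tree_finite tree_laminar J_mem by blast
  have "v \<in> matched M0" if "v \<in> units" for v
  proof (rule ccontr)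
    assume "v \<notin> matched M0"
    then have "exposed M0 J v" using that unfolding exposed_def matched_def by force
    then have "unit_sign v * charge J > 0"
      using M0 J_mem that unfolding compatible_matching_def by blast
    then show False using charge_eq_sum[of J] balanced by simp
  qed
  moreover have "signed_matching M0" "matched M0 \<subseteq> units"
    using M0 matched_subset_U unfolding compatible_matching_def by blast+
  moreover have "\<And>I v. I \<in> T 0 \<Longrightarrow> v \<in> units \<Longrightarrow> exposed M0 I v \<Longrightarrow> unit_sign v * charge I > 0"
    using M0 tree_subset_J[of 0] unfolding compatible_matching_def by blast
  ultimately show ?thesis using result by blast
qed

lemma goods_matching_exists:
  obtains G where "signed_matching G" "\<And>a b. (a, b) \<in> G \<Longrightarrow> k (fst a) = k (fst b)"
    "\<And>i I v. i \<in> {1..n} \<Longrightarrow> I \<in> T i \<Longrightarrow> v \<in> units \<Longrightarrow> exposed G I v \<Longrightarrow> unit_sign v * charge I > 0"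
proof -
  note result = that
  have "\<exists>M. compatible_matching (T i) (R i) M" if "i \<in> {1..n}" for i
    using compatible_matching_exists tree_finite tree_laminar R_mem that by simp
  then obtain Mf where Mf: "\<And>i. i \<in> {1..n} \<Longrightarrow> compatible_matching (T i) (R i) (Mf i)"
    by metis
  have Mf_in: "Mf i \<subseteq> units_in (R i) \<times> units_in (R i)" if "i \<in> {1..n}" for i
    using Mf[OF that] unfolding compatible_matching_def by blast
  define G where "G = (\<Union>i\<in>{1..n}. Mf i)"
  have "signed_matching G" unfolding G_def
  proof (rule signed_matching_UN)
    show "signed_matching (Mf i)" if "i \<in> {1..n}" for i
      using Mf[OF that] unfolding compatible_matching_def by blast
    show "matched (Mf i) \<inter> matched (Mf i') = {}" if "i \<in> {1..n}" "i' \<in> {1..n}" "i \<noteq> i'" for i i'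
      using matched_subset[OF Mf_in[OF that(1)]] matched_subset[OF Mf_in[OF that(2)]]
        R_disjoint[OF that(3)] unfolding units_in_def by blast
  qed
  moreover have "k (fst a) = k (fst b)" if ab: "(a, b) \<in> G" for a b
  proof -
    obtain i where "i \<in> {1..n}" "(a, b) \<in> Mf i" using ab unfolding G_def by blast
    then have "fst a \<in> R i" "fst b \<in> R i" using Mf_in unfolding units_in_def by blast+
    then show ?thesis by (simp add: mem_R)
  qed
  moreover have "unit_sign v * charge I > 0"
    if "i \<in> {1..n}" "I \<in> T i" "v \<in> units" "exposed G I v" for i I v
  proof -
    have "exposed (Mf i) I v" using exposed_mono[OF _ that(4), of "Mf i"] that(1) unfolding G_def by blast
    then show ?thesis
      using Mf[OF that(1)] that(2,3) tree_subset_R[OF that(1,2)] unfolding compatible_matching_def by blast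
  qed
  ultimately show ?thesis using result by blast
qed

lemma weight_R:
  assumes "v \<in> units"
  shows "weight (R t) v = unit_sign v * unit_vec (k (fst v)) t"
  using assms unfolding weight_def unit_vec_def by (auto simp: mem_R)

lemma goods_projection:
  assumes G: "signed_matching G" "\<And>a b. (a, b) \<in> G \<Longrightarrow> k (fst a) = k (fst b)"
    and S: "S \<subseteq> units" "closed_under G S"
  shows "(\<Sum>j\<in>R t. signed_count S j) = (\<Sum>v\<in>S - matched G. weight (R t) v)"
proof -
  have fin: "finite S" using S(1) finite_subset by blast
  have pair_zero: "weight (R t) (fst p) + weight (R t) (snd p) = 0" if "p \<in> G" for p
  proof -
    obtain a b where ab: "p = (a, b)" by (cases p) auto
    have "a \<in> units" "b \<in> units" "unit_sign a = 1" "unit_sign b = -1"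
      using signed_matchingD[OF G(1)] that ab by auto
    then show ?thesis using G(2) that ab weight_R by simp
  qed
  have "(\<Sum>j\<in>R t. signed_count S j) = (\<Sum>v\<in>S. weight (R t) v)"
    using sum_signed_count[OF S(1)] finite_subset[OF R_subset] by blast
  also have "\<dots> = (\<Sum>p\<in>{p\<in>G. fst p \<in> S}. weight (R t) (fst p) + weight (R t) (snd p))
      + (\<Sum>v\<in>S - matched G. weight (R t) v)"
    by (rule sum_split_matching[OF fin signed_matching_matching[OF G(1)] signed_matching_disjoint[OF G(1)] S(2)])
  finally show ?thesis using pair_zero by simp
qed

lemma signed_count_nonzero:
  assumes "W \<subseteq> units" "v \<in> W"
  shows "signed_count W (fst v) \<noteq> 0"
proof -
  have "finite W" using assms(1) finite_U finite_subset by blast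
  then have "finite {v'\<in>W. fst v' = fst v}" by simp
  moreover have "v \<in> {v'\<in>W. fst v' = fst v}" using assms(2) by simp
  ultimately have "card {v'\<in>W. fst v' = fst v} > 0" using card_gt_0_iff by blast
  moreover have "d (fst v) \<noteq> 0" using assms by auto
  ultimately show ?thesis by (simp add: signed_count_eq[OF assms(1)] sgn_0_0)
qed

lemma component_moves:
  assumes G: "signed_matching G" "\<And>a b. (a, b) \<in> G \<Longrightarrow> k (fst a) = k (fst b)"
    and S: "S \<subseteq> units" "closed_under G S" "v \<in> S"
    and unmatched: "S - matched G = {} \<or>
      (\<exists>a b. S - matched G = {a, b} \<and> unit_sign a = 1 \<and> unit_sign b = -1)"
  shows "\<exists>a b. moves (signed_count S) a b"
  using unmatched
proof
  assume none: "S - matched G = {}"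
  have "fst v \<in> J" using S by auto
  then have "moves (signed_count S) (k (fst v)) (k (fst v))"
    unfolding moves_def using goods_projection[OF G S(1,2)] none good_of_var by simp
  then show ?thesis by blast
next
  assume "\<exists>a b. S - matched G = {a, b} \<and> unit_sign a = 1 \<and> unit_sign b = -1"
  then obtain a b where ab: "S - matched G = {a, b}" "unit_sign a = 1" "unit_sign b = -1" by blast
  then have ab_units: "a \<noteq> b" "a \<in> units" "b \<in> units" using S(1) by auto
  have "(\<Sum>v\<in>S - matched G. weight (R t) v) = unit_vec (k (fst a)) t - unit_vec (k (fst b)) t" for t
    unfolding ab(1) using ab_units ab(2,3) by (simp add: weight_R)
  then have "moves (signed_count S) (k (fst b)) (k (fst a))"
    unfolding moves_def using goods_projection[OF G S(1,2)] good_of_var[of "fst a"] good_of_var[of "fst b"]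
      ab_units by auto
  then show ?thesis by blast
qed

lemma elementary_vector_exists:
  assumes "\<exists>j\<in>J. d j \<noteq> 0"
  obtains c a b where "\<forall>I\<in>\<I>. conforms c d I" "\<exists>j\<in>J. c j \<noteq> 0" "moves c a b"
proof -
  note result = that
  obtain M0 where M0: "signed_matching M0" "matched M0 = units"
    and M0_exposed: "\<And>I v. I \<in> T 0 \<Longrightarrow> v \<in> units \<Longrightarrow> exposed M0 I v \<Longrightarrow> unit_sign v * charge I > 0"
    using root_matching_exists by blast
  obtain G where G: "signed_matching G" "\<And>a b. (a, b) \<in> G \<Longrightarrow> k (fst a) = k (fst b)"
    and G_exposed: "\<And>i I v. i \<in> {1..n} \<Longrightarrow> I \<in> T i \<Longrightarrow> v \<in> units \<Longrightarrow> exposed G I v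
      \<Longrightarrow> unit_sign v * charge I > 0"
    using goods_matching_exists by blast
  obtain j where "j \<in> J" "d j \<noteq> 0" using assms by blast
  then have "(j, 0) \<in> units" by simp
  then obtain S where S: "S \<subseteq> units" "S \<noteq> {}" "closed_under M0 S" "closed_under G S"
    and S_unmatched: "S - matched G = {} \<or>
      (\<exists>a b. S - matched G = {a, b} \<and> unit_sign a = 1 \<and> unit_sign b = -1)"
    using alternating_component_exists[OF M0 G(1)] by blast
  have conform: "conforms (signed_count S) d I" if I: "I \<in> \<I>" for I
    using I
  proof (cases rule: family_cases)
    case 1
    show ?thesis
      by (rule signed_count_conforms[OF M0(1) S(1,3) tree_subset_J[of 0 I]]) (use 1 M0_exposed in auto)
  next
    case (2 i)
    show ?thesis
      by (rule signed_count_conforms[OF G(1) S(1,4) tree_subset_J[of i I]]) (use 2 G_exposed in auto)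
  qed
  obtain v where v: "v \<in> S" using S(2) by blast
  then have "fst v \<in> J" "signed_count S (fst v) \<noteq> 0" using S(1) signed_count_nonzero by auto
  moreover have "\<exists>a b. moves (signed_count S) a b"
    using component_moves[OF G S(1,4) v S_unmatched] .
  ultimately show ?thesis using result conform by blast
qed

end

context assignment_msg
begin

lemma conforms_trans:
  assumes "conforms c d I" "conforms c' (\<lambda>j. d j - c j) I"
  shows "conforms c' d I"
  using assms unfolding conforms_def by (simp add: sum_subtractf) linarith

lemma conformal_decomposition:
  assumes "(\<Sum>j\<in>J. d j) = 0"
  shows "\<exists>cs. (\<forall>j\<in>J. d j = (\<Sum>(c, a, b)\<leftarrow>cs. c j)) \<and>
           (\<forall>(c, a, b)\<in>set cs. (\<forall>I\<in>\<I>. conforms c d I) \<and> moves c a b)"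
  using assms
proof (induction "\<Sum>j\<in>J. nat \<bar>d j\<bar>" arbitrary: d rule: less_induct)
  case less
  show ?case
  proof (cases "\<forall>j\<in>J. d j = 0")
    case True
    then show ?thesis by (intro exI[of _ "[]"]) simp
  next
    case False
    interpret difference_units n m k w \<I> l u T d
      by unfold_locales (rule less.prems)
    obtain c a b where c: "\<forall>I\<in>\<I>. conforms c d I" "\<exists>j\<in>J. c j \<noteq> 0" "moves c a b"
      using elementary_vector_exists False by blast
    define d' where "d' = (\<lambda>j. d j - c j)"
    have J_family: "J \<in> \<I>" using tree_mem_family[of 0] J_mem by simp
    have "(\<Sum>j\<in>J. c j) = 0" using c(1) J_family less.prems unfolding conforms_def by force
    then have d'_balanced: "(\<Sum>j\<in>J. d' j) = 0" unfolding d'_def using less.prems by (simp add: sum_subtractf)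
    \<comment> \<open>Singletons belong to the family, so \<open>c\<close> conforms to \<open>d\<close> entrywise and \<open>d - c\<close> is smaller.\<close>
    have single: "conforms c d {j}" if "j \<in> J" for j
      using c(1) singleton_mem[OF that] tree_mem_family[of 0] by blast
    have le: "nat \<bar>d' j\<bar> \<le> nat \<bar>d j\<bar>" if "j \<in> J" for j
      using single[OF that] unfolding conforms_def d'_def by auto
    obtain j1 where j1: "j1 \<in> J" "c j1 \<noteq> 0" using c(2) by blast
    have "nat \<bar>d' j1\<bar> < nat \<bar>d j1\<bar>" using single[OF j1(1)] j1(2) unfolding conforms_def d'_def by auto
    then have "(\<Sum>j\<in>J. nat \<bar>d' j\<bar>) < (\<Sum>j\<in>J. nat \<bar>d j\<bar>)"
      by (intro sum_strict_mono_ex1) (use le j1 in auto)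
    then obtain cs where cs: "\<forall>j\<in>J. d' j = (\<Sum>(c, a, b)\<leftarrow>cs. c j)"
      "\<forall>(c', a', b')\<in>set cs. (\<forall>I\<in>\<I>. conforms c' d' I) \<and> moves c' a' b'"
      using less.hyps[OF _ d'_balanced] by blast
    have "d j = (\<Sum>(c, a, b)\<leftarrow>(c, a, b) # cs. c j)" if "j \<in> J" for j
    proof -
      have "d j - c j = (\<Sum>(c, a, b)\<leftarrow>cs. c j)" using cs(1) that unfolding d'_def by blast
      then have "d j = c j + (\<Sum>(c, a, b)\<leftarrow>cs. c j)" by linarith
      then show ?thesis by simp
    qed
    moreover have "\<forall>(c', a', b')\<in>set ((c, a, b) # cs). (\<forall>I\<in>\<I>. conforms c' d I) \<and> moves c' a' b'"
      using c cs(2) conforms_trans unfolding d'_def by fastforce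
    ultimately show ?thesis by blast
  qed
qed

end

section \<open>Demand and exchange\<close>

context assignment_msg
begin

definition feasible :: "(nat \<Rightarrow> int) \<Rightarrow> bool" where
  "feasible x \<longleftrightarrow> (\<forall>I\<in>\<I>. l I \<le> (\<Sum>j\<in>I. x j) \<and> (\<Sum>j\<in>I. x j) \<le> u I)"

definition bundle_of :: "(nat \<Rightarrow> int) \<Rightarrow> nat \<Rightarrow> int" where
  "bundle_of x i = (if i \<in> {1..n} then (\<Sum>j\<in>R i. x j) else 0)"

definition solution_value :: "(nat \<Rightarrow> int) \<Rightarrow> real" where
  "solution_value x = (\<Sum>j\<in>J. w j * real_of_int (x j))"

definition utility :: "(nat \<Rightarrow> real) \<Rightarrow> (nat \<Rightarrow> int) \<Rightarrow> real" where
  "utility p x = solution_value x - price_pair n p (bundle_of x)"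

abbreviation bundles :: "(nat \<Rightarrow> int) set" where
  "bundles \<equiv> am_bundles n m k \<I> l u"

abbreviation valuation :: "(nat \<Rightarrow> int) \<Rightarrow> real" where
  "valuation \<equiv> am_valuation n m k w \<I> l u"

abbreviation optimal_for :: "(nat \<Rightarrow> int) \<Rightarrow> (nat \<Rightarrow> int) \<Rightarrow> bool" where
  "optimal_for x q \<equiv> am_feasible n m k \<I> l u x q \<and> solution_value x = valuation q"

lemma am_feasible_iff:
  "am_feasible n m k \<I> l u x q \<longleftrightarrow> feasible x \<and> (\<forall>i\<in>{1..n}. (\<Sum>j\<in>R i. x j) = q i)"
  unfolding am_feasible_def feasible_def by simp

lemma feasible_bounds:
  assumes "feasible x" "j \<in> J"
  shows "l {j} \<le> x j \<and> x j \<le> u {j}"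
proof -
  have "{j} \<in> \<I>" using singleton_mem[OF assms(2)] tree_mem_family[of 0] by simp
  then have "l {j} \<le> (\<Sum>i\<in>{j}. x i) \<and> (\<Sum>i\<in>{j}. x i) \<le> u {j}"
    using assms(1) unfolding feasible_def by blast
  then show ?thesis by simp
qed

lemma valuation_eq: "valuation q = Max {solution_value x | x. am_feasible n m k \<I> l u x q}"
  unfolding am_valuation_def solution_value_def by simp

lemma solution_values_finite:
  "finite {solution_value x | x. am_feasible n m k \<I> l u x q}"
proof -
  let ?B = "PiE J (\<lambda>j. {l {j}..u {j}})"
  have "{solution_value x | x. am_feasible n m k \<I> l u x q} \<subseteq> solution_value ` ?B"
  proof
    fix z assume "z \<in> {solution_value x | x. am_feasible n m k \<I> l u x q}"
    then obtain x where "z = solution_value x" "am_feasible n m k \<I> l u x q" by auto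
    then have x: "z = solution_value x" "feasible x" unfolding am_feasible_iff by simp_all
    have "restrict x J \<in> ?B" using feasible_bounds[OF x(2)] unfolding PiE_iff by auto
    moreover have "solution_value (restrict x J) = z"
      unfolding x(1) solution_value_def by (rule sum.cong) auto
    ultimately show "z \<in> solution_value ` ?B" by (metis image_eqI)
  qed
  then show ?thesis by (rule finite_subset) (simp add: finite_PiE)
qed

lemma solution_value_le_valuation: "am_feasible n m k \<I> l u x q \<Longrightarrow> solution_value x \<le> valuation q"
  unfolding valuation_eq by (rule Max_ge[OF solution_values_finite]) blast

lemma valuation_attained:
  assumes "q \<in> bundles"
  obtains x where "optimal_for x q"
proof -
  obtain x0 where "am_feasible n m k \<I> l u x0 q" using assms unfolding am_bundles_def by blast
  then have "{solution_value x | x. am_feasible n m k \<I> l u x q} \<noteq> {}" by blast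
  then have "valuation q \<in> {solution_value x | x. am_feasible n m k \<I> l u x q}"
    unfolding valuation_eq by (rule Max_in[OF solution_values_finite])
  then obtain x where "valuation q = solution_value x" "am_feasible n m k \<I> l u x q" by auto
  then show ?thesis using that by simp
qed

lemma bundle_of_mem: "feasible x \<Longrightarrow> bundle_of x \<in> bundles \<and> am_feasible n m k \<I> l u x (bundle_of x)"
  unfolding am_bundles_def am_feasible_iff bundle_of_def by auto

lemma price_pair_bundle_of:
  "am_feasible n m k \<I> l u x q \<Longrightarrow> price_pair n p (bundle_of x) = price_pair n p q"
  unfolding price_pair_def bundle_of_def am_feasible_iff by simp

lemma utility_add: "utility p (\<lambda>j. x j + c j) = utility p x + utility p c"
proof -
  have "solution_value (\<lambda>j. x j + c j) = solution_value x + solution_value c"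
    unfolding solution_value_def by (simp add: sum.distrib distrib_left)
  moreover have "price_pair n p (bundle_of (\<lambda>j. x j + c j)) =
      price_pair n p (bundle_of x) + price_pair n p (bundle_of c)"
    unfolding price_pair_def bundle_of_def by (simp add: sum.distrib distrib_left)
  ultimately show ?thesis unfolding utility_def by simp
qed

lemma utility_diff: "utility p (\<lambda>j. x j - c j) = utility p x - utility p c"
proof -
  have "solution_value (\<lambda>j. x j - c j) = solution_value x - solution_value c"
    unfolding solution_value_def by (simp add: sum_subtractf right_diff_distrib)
  moreover have "price_pair n p (bundle_of (\<lambda>j. x j - c j)) =
      price_pair n p (bundle_of x) - price_pair n p (bundle_of c)"
    unfolding price_pair_def bundle_of_def by (simp add: sum_subtractf right_diff_distrib)
  ultimately show ?thesis unfolding utility_def by simp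
qed

lemma utility_le_demanded:
  assumes "q \<in> demand n bundles valuation p" "optimal_for x q" "feasible z"
  shows "utility p z \<le> utility p x"
proof -
  have z: "bundle_of z \<in> bundles" "am_feasible n m k \<I> l u z (bundle_of z)"
    using bundle_of_mem[OF assms(3)] by auto
  have "utility p z \<le> valuation (bundle_of z) - price_pair n p (bundle_of z)"
    unfolding utility_def using solution_value_le_valuation[OF z(2)] by simp
  also have "\<dots> \<le> valuation q - price_pair n p q"
    using assms(1) z(1) unfolding demand_def by blast
  also have "\<dots> = utility p x"
    unfolding utility_def using assms(2) price_pair_bundle_of[OF conjunct1[OF assms(2)]] by simp
  finally show ?thesis .
qed

lemma bundle_of_demanded:
  assumes "q \<in> demand n bundles valuation p" "optimal_for x q" "feasible z"
    and "utility p x \<le> utility p z"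
  shows "bundle_of z \<in> demand n bundles valuation p"
proof -
  have z: "bundle_of z \<in> bundles" "am_feasible n m k \<I> l u z (bundle_of z)"
    using bundle_of_mem[OF assms(3)] by auto
  have "valuation q' - price_pair n p q' \<le> valuation (bundle_of z) - price_pair n p (bundle_of z)"
    if q': "q' \<in> bundles" for q'
  proof -
    obtain x' where x': "optimal_for x' q'" using valuation_attained[OF q'] by blast
    then have "valuation q' - price_pair n p q' = utility p x'"
      unfolding utility_def using price_pair_bundle_of[OF conjunct1[OF x']] by simp
    also have "\<dots> \<le> utility p x"
      using utility_le_demanded[OF assms(1,2)] x' am_feasible_iff by blast
    also have "\<dots> \<le> utility p z" using assms(4) .
    also have "\<dots> \<le> valuation (bundle_of z) - price_pair n p (bundle_of z)"
      unfolding utility_def using solution_value_le_valuation[OF z(2)] by simp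
    finally show ?thesis .
  qed
  then show ?thesis unfolding demand_def using z(1) by blast
qed

lemma conformal_feasible:
  assumes "feasible x" "feasible y" "\<forall>I\<in>\<I>. conforms c (\<lambda>j. y j - x j) I"
  shows "feasible (\<lambda>j. x j + c j)" "feasible (\<lambda>j. y j - c j)"
proof -
  have "l I \<le> (\<Sum>j\<in>I. x j + c j) \<and> (\<Sum>j\<in>I. x j + c j) \<le> u I \<and>
        l I \<le> (\<Sum>j\<in>I. y j - c j) \<and> (\<Sum>j\<in>I. y j - c j) \<le> u I" if I: "I \<in> \<I>" for I
  proof -
    have "l I \<le> (\<Sum>j\<in>I. x j)" "(\<Sum>j\<in>I. x j) \<le> u I" "l I \<le> (\<Sum>j\<in>I. y j)" "(\<Sum>j\<in>I. y j) \<le> u I"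
      using assms(1,2) I unfolding feasible_def by auto
    moreover have "conforms c (\<lambda>j. y j - x j) I" using assms(3) I by blast
    ultimately show ?thesis unfolding conforms_def by (simp add: sum.distrib sum_subtractf) linarith
  qed
  then show "feasible (\<lambda>j. x j + c j)" "feasible (\<lambda>j. y j - c j)" unfolding feasible_def by auto
qed

text \<open>Moving along a conformal part of \<open>y - x\<close> from both ends keeps the total utility, and
  neither end can gain; so both moved solutions are again optimal.\<close>

lemma conformal_exchange:
  assumes q: "q \<in> demand n bundles valuation p" "optimal_for x q"
    and r: "r \<in> demand n bundles valuation p" "optimal_for y r"
    and c: "\<forall>I\<in>\<I>. conforms c (\<lambda>j. y j - x j) I"
  shows "bundle_of (\<lambda>j. x j + c j) \<in> demand n bundles valuation p"
    "bundle_of (\<lambda>j. y j - c j) \<in> demand n bundles valuation p"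
proof -
  have feasible_xy: "feasible x" "feasible y" using q(2) r(2) am_feasible_iff by auto
  note moved = conformal_feasible[OF feasible_xy c]
  have "utility p (\<lambda>j. x j + c j) \<le> utility p x" "utility p (\<lambda>j. y j - c j) \<le> utility p y"
    using utility_le_demanded[OF q moved(1)] utility_le_demanded[OF r moved(2)] .
  then have "utility p x \<le> utility p (\<lambda>j. x j + c j)" "utility p y \<le> utility p (\<lambda>j. y j - c j)"
    unfolding utility_add utility_diff by simp_all
  then show "bundle_of (\<lambda>j. x j + c j) \<in> demand n bundles valuation p"
    "bundle_of (\<lambda>j. y j - c j) \<in> demand n bundles valuation p"
    using bundle_of_demanded[OF q moved(1)] bundle_of_demanded[OF r moved(2)] by blast+
qed

lemma bundle_of_moves:
  assumes "optimal_for x q" "q \<in> bundles" "moves c a b"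
  shows "bundle_of (\<lambda>j. x j + c j) = (\<lambda>t. q t - unit_vec a t + unit_vec b t)"
    and "bundle_of (\<lambda>j. x j - c j) = (\<lambda>t. q t + unit_vec a t - unit_vec b t)"
proof -
  have out: "q t = 0" "unit_vec a t = 0" "unit_vec b t = 0" if "t \<notin> {1..n}" for t
    using assms(2,3) that unfolding am_bundles_def moves_def unit_vec_def by auto
  have "(\<Sum>j\<in>R t. x j) = q t" "(\<Sum>j\<in>R t. c j) = unit_vec b t - unit_vec a t" if "t \<in> {1..n}" for t
    using assms(1,3) that unfolding am_feasible_iff moves_def by auto
  then show "bundle_of (\<lambda>j. x j + c j) = (\<lambda>t. q t - unit_vec a t + unit_vec b t)"
    and "bundle_of (\<lambda>j. x j - c j) = (\<lambda>t. q t + unit_vec a t - unit_vec b t)"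
    unfolding bundle_of_def using out by (auto simp: sum.distrib sum_subtractf)
qed

lemma size_eq_sum:
  assumes "am_feasible n m k \<I> l u x q"
  shows "(\<Sum>j\<in>J. x j) = bsize n q"
proof -
  have "(\<Sum>j\<in>J. x j) = (\<Sum>i\<in>{1..n}. \<Sum>j\<in>{j\<in>J. k j = i}. x j)"
    by (rule sum.group[symmetric]) (use good_of_var in auto)
  also have "\<dots> = bsize n q"
    unfolding bsize_def using assms unfolding am_feasible_iff goods_var_def by simp
  finally show ?thesis .
qed

lemma moves_sign:
  assumes "moves c a b" "conforms c d (R i)" "i \<in> {1..n}"
  shows "sign_agrees (\<Sum>j\<in>R i. d j) (unit_vec b i - unit_vec a i)"
  using assms unfolding moves_def conforms_def sign_agrees_def by auto

lemma sum_list_moves: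
  assumes "\<forall>(c, a, b)\<in>set cs. moves c a b" "t \<in> {1..n}"
  shows "(\<Sum>(a, b)\<leftarrow>map snd cs. unit_vec b t - unit_vec a t) = (\<Sum>(c, a, b)\<leftarrow>cs. \<Sum>j\<in>R t. c j)"
  using assms by (induction cs) (auto simp: moves_def)

lemma exchange_moves_exist:
  assumes x: "optimal_for x q" and y: "optimal_for y r" and size: "bsize n q = bsize n r"
  obtains ps where
    "\<And>a b. (a, b) \<in> set ps \<Longrightarrow> \<exists>c. (\<forall>I\<in>\<I>. conforms c (\<lambda>j. y j - x j) I) \<and> moves c a b"
    "\<And>i. i \<in> {1..n} \<Longrightarrow> (\<Sum>(a, b)\<leftarrow>ps. unit_vec b i - unit_vec a i) = r i - q i"
proof -
  note result = that
  define d where "d j = y j - x j" for j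
  have "(\<Sum>j\<in>J. d j) = 0"
    using size_eq_sum[OF conjunct1[OF x]] size_eq_sum[OF conjunct1[OF y]] size
    unfolding d_def by (simp add: sum_subtractf)
  then obtain cs where cs_sum: "\<forall>j\<in>J. d j = (\<Sum>(c, a, b)\<leftarrow>cs. c j)"
    and cs: "\<forall>(c, a, b)\<in>set cs. (\<forall>I\<in>\<I>. conforms c d I) \<and> moves c a b"
    using conformal_decomposition by blast
  have "\<exists>c. (\<forall>I\<in>\<I>. conforms c (\<lambda>j. y j - x j) I) \<and> moves c a b"
    if ab: "(a, b) \<in> set (map snd cs)" for a b
  proof -
    obtain c where "(c, a, b) \<in> set cs" using ab by force
    then have "(\<forall>I\<in>\<I>. conforms c d I) \<and> moves c a b" using cs by fastforce
    then show ?thesis unfolding d_def by blast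
  qed
  moreover have "(\<Sum>(a, b)\<leftarrow>map snd cs. unit_vec b i - unit_vec a i) = r i - q i" if i: "i \<in> {1..n}" for i
  proof -
    have "(\<Sum>(a, b)\<leftarrow>map snd cs. unit_vec b i - unit_vec a i) = (\<Sum>(c, a, b)\<leftarrow>cs. \<Sum>j\<in>R i. c j)"
      by (rule sum_list_moves) (use cs i in auto)
    also have "\<dots> = (\<Sum>j\<in>R i. \<Sum>(c, a, b)\<leftarrow>cs. c j)" by (rule sum_sum_list_swap[symmetric])
    also have "\<dots> = (\<Sum>j\<in>R i. d j)"
    proof (rule sum.cong[OF refl])
      fix j assume "j \<in> R i"
      then have "j \<in> J" using R_subset by blast
      then show "(\<Sum>(c, a, b)\<leftarrow>cs. c j) = d j" using cs_sum by simp
    qed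
    also have "\<dots> = r i - q i" using x y i unfolding d_def am_feasible_iff by (simp add: sum_subtractf)
    finally show ?thesis .
  qed
  ultimately show ?thesis by (rule result)
qed

theorem strong_exchange:
  assumes q: "q \<in> demand n bundles valuation p" and r: "r \<in> demand n bundles valuation p"
    and size: "bsize n q = bsize n r"
  shows "\<exists>\<sigma>. \<sigma> \<subseteq> supp_pos n q r \<times> supp_pos n r q \<and>
           (\<forall>(i, j)\<in>\<sigma>. (\<lambda>t. q t - unit_vec i t + unit_vec j t) \<in> demand n bundles valuation p \<and>
                        (\<lambda>t. r t + unit_vec i t - unit_vec j t) \<in> demand n bundles valuation p) \<and>
           (\<forall>i\<in>supp_pos n q r. 1 \<le> card {j'. (i, j') \<in> \<sigma>} \<and> int (card {j'. (i, j') \<in> \<sigma>}) \<le> q i - r i) \<and>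
           (\<forall>j\<in>supp_pos n r q. 1 \<le> card {i'. (i', j) \<in> \<sigma>} \<and> int (card {i'. (i', j) \<in> \<sigma>}) \<le> r j - q j)"
proof -
  have bundles: "q \<in> bundles" "r \<in> bundles" using q r unfolding demand_def by auto
  obtain x where x: "optimal_for x q" using valuation_attained bundles(1) by blast
  obtain y where y: "optimal_for y r" using valuation_attained bundles(2) by blast
  obtain ps where ps: "\<And>a b. (a, b) \<in> set ps \<Longrightarrow> \<exists>c. (\<forall>I\<in>\<I>. conforms c (\<lambda>j. y j - x j) I) \<and> moves c a b"
    and net: "\<And>i. i \<in> {1..n} \<Longrightarrow> (\<Sum>(a, b)\<leftarrow>ps. unit_vec b i - unit_vec a i) = r i - q i"
    using exchange_moves_exist[OF x y size] by blast
  define \<sigma> where "\<sigma> = {(a, b). (a, b) \<in> set ps \<and> a \<noteq> b}"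
  have range: "a \<in> {1..n} \<and> b \<in> {1..n}" if "(a, b) \<in> set ps" for a b
    using ps[OF that] unfolding moves_def by blast
  have sign: "sign_agrees (r i - q i) (unit_vec b i - unit_vec a i)"
    if ab: "(a, b) \<in> set ps" and i: "i \<in> {1..n}" for a b i
  proof -
    obtain c where c: "\<forall>I\<in>\<I>. conforms c (\<lambda>j. y j - x j) I" "moves c a b" using ps[OF ab] by blast
    have "R i \<in> \<I>" using R_mem[OF i] tree_mem_family[of i] i by simp
    moreover have "(\<Sum>j\<in>R i. y j - x j) = r i - q i"
      using x y i unfolding am_feasible_iff by (simp add: sum_subtractf)
    ultimately show ?thesis using moves_sign[OF c(2), of "\<lambda>j. y j - x j" i] c(1) i by simp
  qed
  have "(\<lambda>t. q t - unit_vec a t + unit_vec b t) \<in> demand n bundles valuation p \<and>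
      (\<lambda>t. r t + unit_vec a t - unit_vec b t) \<in> demand n bundles valuation p" if ab: "(a, b) \<in> \<sigma>" for a b
  proof -
    have "(a, b) \<in> set ps" using ab unfolding \<sigma>_def by auto
    then obtain c where conf: "\<forall>I\<in>\<I>. conforms c (\<lambda>j. y j - x j) I" and mv: "moves c a b"
      using ps by blast
    have "bundle_of (\<lambda>j. x j + c j) = (\<lambda>t. q t - unit_vec a t + unit_vec b t)"
      by (rule bundle_of_moves(1)[OF x bundles(1) mv])
    moreover have "bundle_of (\<lambda>j. y j - c j) = (\<lambda>t. r t + unit_vec a t - unit_vec b t)"
      by (rule bundle_of_moves(2)[OF y bundles(2) mv])
    ultimately show ?thesis using conformal_exchange[OF q x r y conf] by simp
  qed
  then have "\<forall>(a, b)\<in>\<sigma>. (\<lambda>t. q t - unit_vec a t + unit_vec b t) \<in> demand n bundles valuation p \<and>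
      (\<lambda>t. r t + unit_vec a t - unit_vec b t) \<in> demand n bundles valuation p" by blast
  then show ?thesis
    using move_pairs_bounds[of ps n r q, OF range sign net, folded \<sigma>_def]
    by (intro exI[of _ \<sigma>] conjI) assumption+
qed

end

theorem theorem1:
  fixes n m :: nat and k :: "nat \<Rightarrow> nat" and w :: "nat \<Rightarrow> real" and \<I> :: "nat set set"
    and l u :: "nat set \<Rightarrow> int" and T :: "nat \<Rightarrow> nat set set"
  assumes "n \<ge> 2"
    and "assignment_message n m k w \<I> l u T"
  defines "Q \<equiv> am_bundles n m k \<I> l u"
    and "v \<equiv> am_valuation n m k w \<I> l u"
  shows "\<forall>p :: nat \<Rightarrow> real. \<forall>q\<in>demand n Q v p. \<forall>r\<in>demand n Q v p.
           bsize n q = Min (bsize n ` demand n Q v p) \<and> bsize n r = Min (bsize n ` demand n Q v p) \<longrightarrow>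
           (\<exists>\<sigma>. \<sigma> \<subseteq> supp_pos n q r \<times> supp_pos n r q \<and>
              (\<forall>(i, j)\<in>\<sigma>. (\<lambda>t. q t - unit_vec i t + unit_vec j t) \<in> demand n Q v p \<and>
                           (\<lambda>t. r t + unit_vec i t - unit_vec j t) \<in> demand n Q v p) \<and>
              (\<forall>i\<in>supp_pos n q r. 1 \<le> card {j'. (i, j') \<in> \<sigma>} \<and>
                                   int (card {j'. (i, j') \<in> \<sigma>}) \<le> q i - r i) \<and>
              (\<forall>j\<in>supp_pos n r q. 1 \<le> card {i'. (i', j) \<in> \<sigma>} \<and>
                                   int (card {i'. (i', j) \<in> \<sigma>}) \<le> r j - q j))"
proof (intro allI ballI impI)
  interpret assignment_msg n m k w \<I> l u T by unfold_locales (fact assms(2))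
  fix p :: "nat \<Rightarrow> real" and q r
  assume "q \<in> demand n Q v p" "r \<in> demand n Q v p"
    and "bsize n q = Min (bsize n ` demand n Q v p) \<and> bsize n r = Min (bsize n ` demand n Q v p)"
  then show "\<exists>\<sigma>. \<sigma> \<subseteq> supp_pos n q r \<times> supp_pos n r q \<and>
              (\<forall>(i, j)\<in>\<sigma>. (\<lambda>t. q t - unit_vec i t + unit_vec j t) \<in> demand n Q v p \<and>
                           (\<lambda>t. r t + unit_vec i t - unit_vec j t) \<in> demand n Q v p) \<and>
              (\<forall>i\<in>supp_pos n q r. 1 \<le> card {j'. (i, j') \<in> \<sigma>} \<and>
                                   int (card {j'. (i, j') \<in> \<sigma>}) \<le> q i - r i) \<and>
              (\<forall>j\<in>supp_pos n r q. 1 \<le> card {i'. (i', j) \<in> \<sigma>} \<and>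
                                   int (card {i'. (i', j) \<in> \<sigma>}) \<le> r j - q j)"
    unfolding Q_def v_def by (intro strong_exchange) simp_all
qed

end
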